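(* The functor $\pi\colon\mathrm{EEED}\to\mathrm{ED}$ is essentially surjective and reflects isomorphisms. Moreover, for any $N,N'\in\mathrm{EEED}$ there is a natural short exact sequence \[ 0\to\mathrm{Hom}(\alpha(N)[2],\gamma(N')/2)\xrightarrow{\xi}\mathrm{EEED}(N,N')\xrightarrow{\pi}\mathrm{ED}(\pi(N),\pi(N'))\to 0. \] (In particular, $\pi$ is full.)
   Context: For an abelian group $U$, $U[2]=\{u:2u=0\}$ and $U/2=U/2U$. An extended $\eta$-diagram is a diagram of abelian groups $B\xrightarrow{\psi}A\xrightarrow{\eta}C\xrightarrow{\chi}B$ with $2\eta=0$, $\psi\chi=0$ and $\chi\eta\psi=2\cdot1_B$; write it $N=(A,B,C,\eta,\chi,\psi)$. A morphism $N\to N'$ is a triple $(f,g,h)$ with $f\colon A\to A'$, $g\colon B\to B'$, $h\colon C\to C'$, $f\psi=\psi'g$, $h\eta=\eta'f$, $g\chi=\chi'h$. One has $2\psi=0=2\chi$, so there are induced maps $C/2\xrightarrow{\chi}B\xrightarrow{\psi}A[2]$; $N$ is exact if this sequence is short exact. $\mathrm{EEED}$ is the category of exact extended $\eta$-diagrams. An $\eta$-diagram is a homomorphism $\eta\colon A\to C$ with $2\eta=0$; morphisms are pairs $(f,h)$ with $h\eta=\eta'f$; this category is $\mathrm{ED}$. The functor $\pi$ sends $N$ to $(A\xrightarrow{\eta}C)$ and $(f,g,h)$ to $(f,h)$; $\alpha(N)=A$, $\gamma(N)=C$. For $u\colon A[2]\to C'/2$, $\xi(u)$ is the morphism $(0,\bar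 u,0)\colon N\to N'$ where $\bar u$ is the composite $B\xrightarrow{\psi}A[2]\xrightarrow{u}C'/2\xrightarrow{\chi'}B'$. *)

theory Defs
  imports "HOL-Algebra.Coset"
begin

text \<open>Abelian groups are HOL-Algebra groups (written multiplicatively; "2u" is u \<otimes> u,
  "0" is the unit).  Homomorphisms between groups are extensional (undefined outside
  the carrier), so that equality of morphisms is HOL equality.\<close>

definition ghom :: "'a monoid \<Rightarrow> 'b monoid \<Rightarrow> ('a \<Rightarrow> 'b) set" where
  "ghom G H = hom G H \<inter> extensional (carrier G)"

definition two_torsion :: "'a monoid \<Rightarrow> 'a set" where
  "two_torsion G = {x \<in> carrier G. x \<otimes>\<^bsub>G\<^esub> x = \<one>\<^bsub>G\<^esub>}"

definition tors2 :: "'a monoid \<Rightarrow> 'a monoid" where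
  "tors2 G = G\<lparr>carrier := two_torsion G\<rparr>"

definition twice :: "'a monoid \<Rightarrow> 'a set" where
  "twice G = {x \<otimes>\<^bsub>G\<^esub> x | x. x \<in> carrier G}"

definition mod2 :: "'a monoid \<Rightarrow> 'a set monoid" where
  "mod2 G = G Mod (twice G)"

definition mod2_map :: "'a monoid \<Rightarrow> 'b monoid \<Rightarrow> ('a \<Rightarrow> 'b) \<Rightarrow> 'a set \<Rightarrow> 'b set" where
  "mod2_map G H h = (\<lambda>X\<in>carrier (mod2 G). twice H #>\<^bsub>H\<^esub> h (SOME x. x \<in> X))"

definition hom_add :: "'a monoid \<Rightarrow> 'b monoid \<Rightarrow> ('a \<Rightarrow> 'b) \<Rightarrow> ('a \<Rightarrow> 'b) \<Rightarrow> 'a \<Rightarrow> 'b" where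
  "hom_add G H u v = (\<lambda>x\<in>carrier G. u x \<otimes>\<^bsub>H\<^esub> v x)"

definition hom_zero :: "'a monoid \<Rightarrow> 'b monoid \<Rightarrow> 'a \<Rightarrow> 'b" where
  "hom_zero G H = (\<lambda>x\<in>carrier G. \<one>\<^bsub>H\<^esub>)"

record ('a, 'b, 'c) eeed =
  grpA :: "'a monoid"
  grpB :: "'b monoid"
  grpC :: "'c monoid"
  eta :: "'a \<Rightarrow> 'c"
  chi :: "'c \<Rightarrow> 'b"
  psi :: "'b \<Rightarrow> 'a"

definition is_eed :: "('a, 'b, 'c) eeed \<Rightarrow> bool" where
  "is_eed N \<longleftrightarrow>
     comm_group (grpA N) \<and> comm_group (grpB N) \<and> comm_group (grpC N) \<and>
     eta N \<in> hom (grpA N) (grpC N) \<and> chi N \<in> hom (grpC N) (grpB N) \<and>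
     psi N \<in> hom (grpB N) (grpA N) \<and>
     (\<forall>a\<in>carrier (grpA N). eta N (a \<otimes>\<^bsub>grpA N\<^esub> a) = \<one>\<^bsub>grpC N\<^esub>) \<and>
     (\<forall>c\<in>carrier (grpC N). psi N (chi N c) = \<one>\<^bsub>grpA N\<^esub>) \<and>
     (\<forall>b\<in>carrier (grpB N). chi N (eta N (psi N b)) = b \<otimes>\<^bsub>grpB N\<^esub> b)"

text \<open>Exactness of the induced sequence C/2 --chi--> B --psi--> A[2], written out:
  psi onto A[2], ker psi = im chi, and the induced map C/2 \<rightarrow> B is injective.\<close>
definition eed_exact :: "('a, 'b, 'c) eeed \<Rightarrow> bool" where
  "eed_exact N \<longleftrightarrow>
     (\<forall>a\<in>two_torsion (grpA N). \<exists>b\<in>carrier (grpB N). psi N b = a) \<and>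
     (\<forall>b\<in>carrier (grpB N). psi N b = \<one>\<^bsub>grpA N\<^esub> \<longrightarrow> (\<exists>c\<in>carrier (grpC N). chi N c = b)) \<and>
     (\<forall>c\<in>carrier (grpC N). chi N c = \<one>\<^bsub>grpB N\<^esub> \<longrightarrow> c \<in> twice (grpC N))"

definition is_eeed :: "('a, 'b, 'c) eeed \<Rightarrow> bool" where
  "is_eeed N \<longleftrightarrow> is_eed N \<and> eed_exact N"

type_synonym ('a, 'b, 'c, 'a2, 'b2, 'c2) eeed_mor =
  "('a \<Rightarrow> 'a2) \<times> ('b \<Rightarrow> 'b2) \<times> ('c \<Rightarrow> 'c2)"

definition eeed_hom :: "('a, 'b, 'c) eeed \<Rightarrow> ('a2, 'b2, 'c2) eeed
    \<Rightarrow> ('a, 'b, 'c, 'a2, 'b2, 'c2) eeed_mor set" where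
  "eeed_hom N N' = {(f, g, h).
     f \<in> ghom (grpA N) (grpA N') \<and> g \<in> ghom (grpB N) (grpB N') \<and> h \<in> ghom (grpC N) (grpC N') \<and>
     (\<forall>b\<in>carrier (grpB N). f (psi N b) = psi N' (g b)) \<and>
     (\<forall>a\<in>carrier (grpA N). h (eta N a) = eta N' (f a)) \<and>
     (\<forall>c\<in>carrier (grpC N). g (chi N c) = chi N' (h c))}"

definition eeed_id :: "('a, 'b, 'c) eeed \<Rightarrow> ('a, 'b, 'c, 'a, 'b, 'c) eeed_mor" where
  "eeed_id N = ((\<lambda>x\<in>carrier (grpA N). x), (\<lambda>x\<in>carrier (grpB N). x), (\<lambda>x\<in>carrier (grpC N). x))"

text \<open>Composition m' \<circ> m, where m has source N.\<close>
definition eeed_comp :: "('a, 'b, 'c) eeed \<Rightarrow> ('a2, 'b2, 'c2, 'a3, 'b3, 'c3) eeed_mor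
    \<Rightarrow> ('a, 'b, 'c, 'a2, 'b2, 'c2) eeed_mor \<Rightarrow> ('a, 'b, 'c, 'a3, 'b3, 'c3) eeed_mor" where
  "eeed_comp N m' m = (case m' of (f', g', h') \<Rightarrow> case m of (f, g, h) \<Rightarrow>
     (compose (carrier (grpA N)) f' f, compose (carrier (grpB N)) g' g, compose (carrier (grpC N)) h' h))"

definition eeed_iso :: "('a, 'b, 'c) eeed \<Rightarrow> ('a2, 'b2, 'c2) eeed
    \<Rightarrow> ('a, 'b, 'c, 'a2, 'b2, 'c2) eeed_mor \<Rightarrow> bool" where
  "eeed_iso N N' m \<longleftrightarrow> m \<in> eeed_hom N N' \<and>
     (\<exists>m'\<in>eeed_hom N' N. eeed_comp N m' m = eeed_id N \<and> eeed_comp N' m m' = eeed_id N')"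

definition eeed_add :: "('a, 'b, 'c) eeed \<Rightarrow> ('a2, 'b2, 'c2) eeed
    \<Rightarrow> ('a, 'b, 'c, 'a2, 'b2, 'c2) eeed_mor \<Rightarrow> ('a, 'b, 'c, 'a2, 'b2, 'c2) eeed_mor
    \<Rightarrow> ('a, 'b, 'c, 'a2, 'b2, 'c2) eeed_mor" where
  "eeed_add N N' m m' = (case m of (f, g, h) \<Rightarrow> case m' of (f', g', h') \<Rightarrow>
     (hom_add (grpA N) (grpA N') f f', hom_add (grpB N) (grpB N') g g', hom_add (grpC N) (grpC N') h h'))"

record ('a, 'c) ed =
  edA :: "'a monoid"
  edC :: "'c monoid"
  edEta :: "'a \<Rightarrow> 'c"

definition is_ed :: "('a, 'c) ed \<Rightarrow> bool" where
  "is_ed E \<longleftrightarrow> comm_group (edA E) \<and> comm_group (edC E) \<and> edEta E \<in> hom (edA E) (edC E) \<and>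
     (\<forall>a\<in>carrier (edA E). edEta E (a \<otimes>\<^bsub>edA E\<^esub> a) = \<one>\<^bsub>edC E\<^esub>)"

type_synonym ('a, 'c, 'a2, 'c2) ed_mor = "('a \<Rightarrow> 'a2) \<times> ('c \<Rightarrow> 'c2)"

definition ed_hom :: "('a, 'c) ed \<Rightarrow> ('a2, 'c2) ed \<Rightarrow> ('a, 'c, 'a2, 'c2) ed_mor set" where
  "ed_hom E E' = {(f, h). f \<in> ghom (edA E) (edA E') \<and> h \<in> ghom (edC E) (edC E') \<and>
     (\<forall>a\<in>carrier (edA E). h (edEta E a) = edEta E' (f a))}"

definition ed_id :: "('a, 'c) ed \<Rightarrow> ('a, 'c, 'a, 'c) ed_mor" where
  "ed_id E = ((\<lambda>x\<in>carrier (edA E). x), (\<lambda>x\<in>carrier (edC E). x))"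

definition ed_comp :: "('a, 'c) ed \<Rightarrow> ('a2, 'c2, 'a3, 'c3) ed_mor
    \<Rightarrow> ('a, 'c, 'a2, 'c2) ed_mor \<Rightarrow> ('a, 'c, 'a3, 'c3) ed_mor" where
  "ed_comp E m' m = (case m' of (f', h') \<Rightarrow> case m of (f, h) \<Rightarrow>
     (compose (carrier (edA E)) f' f, compose (carrier (edC E)) h' h))"

definition ed_iso :: "('a, 'c) ed \<Rightarrow> ('a2, 'c2) ed \<Rightarrow> ('a, 'c, 'a2, 'c2) ed_mor \<Rightarrow> bool" where
  "ed_iso E E' m \<longleftrightarrow> m \<in> ed_hom E E' \<and>
     (\<exists>m'\<in>ed_hom E' E. ed_comp E m' m = ed_id E \<and> ed_comp E' m m' = ed_id E')"

definition ed_isomorphic :: "('a, 'c) ed \<Rightarrow> ('a2, 'c2) ed \<Rightarrow> bool" where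
  "ed_isomorphic E E' \<longleftrightarrow> (\<exists>m. ed_iso E E' m)"

definition ed_add :: "('a, 'c) ed \<Rightarrow> ('a2, 'c2) ed
    \<Rightarrow> ('a, 'c, 'a2, 'c2) ed_mor \<Rightarrow> ('a, 'c, 'a2, 'c2) ed_mor \<Rightarrow> ('a, 'c, 'a2, 'c2) ed_mor" where
  "ed_add E E' m m' = (case m of (f, h) \<Rightarrow> case m' of (f', h') \<Rightarrow>
     (hom_add (edA E) (edA E') f f', hom_add (edC E) (edC E') h h'))"

definition ed_zero :: "('a, 'c) ed \<Rightarrow> ('a2, 'c2) ed \<Rightarrow> ('a, 'c, 'a2, 'c2) ed_mor" where
  "ed_zero E E' = (hom_zero (edA E) (edA E'), hom_zero (edC E) (edC E'))"

definition pi_obj :: "('a, 'b, 'c) eeed \<Rightarrow> ('a, 'c) ed" where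
  "pi_obj N = \<lparr>edA = grpA N, edC = grpC N, edEta = eta N\<rparr>"

definition pi_mor :: "('a, 'b, 'c, 'a2, 'b2, 'c2) eeed_mor \<Rightarrow> ('a, 'c, 'a2, 'c2) ed_mor" where
  "pi_mor m = (case m of (f, g, h) \<Rightarrow> (f, h))"

text \<open>xi(u) = (0, chi' o u o psi, 0) for u : A[2] \<rightarrow> C'/2; the induced map
  chi' : C'/2 \<rightarrow> B' is evaluated on a representative of the coset.\<close>
definition xi :: "('a, 'b, 'c) eeed \<Rightarrow> ('a2, 'b2, 'c2) eeed
    \<Rightarrow> ('a \<Rightarrow> 'c2 set) \<Rightarrow> ('a, 'b, 'c, 'a2, 'b2, 'c2) eeed_mor" where
  "xi N N' u = (hom_zero (grpA N) (grpA N'),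
                (\<lambda>b\<in>carrier (grpB N). chi N' (SOME c. c \<in> u (psi N b))),
                hom_zero (grpC N) (grpC N'))"

end

theory Submission
  imports Defs "HOL-Algebra.Free_Abelian_Groups"
begin

text \<open>
  A morphism
  (0, g, 0) kills im chi and lands in ker psi' = im chi', so g = chi' \<circ> u \<circ> psi for a unique u;
  this is the exactness at EEED(N, N').  Fullness: for a morphism (f, h) of eta-diagrams, chi' \<circ> h
  induces a map on im chi, which contains 2B because chi eta psi = 2, and it extends to B by a Zorn
  argument in which the square roots that are needed are found in the fibres of psi' over
  f \<circ> psi.  Reflection of isomorphisms is the five lemma.

  For essential surjectivity one needs an extension B of A[2] by C/2 whose squaring map is
  v \<mapsto> [eta v].  Take B = A[2] \<times> C/2 with multiplication twisted by a symmetric 2-cocycle c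
  with c v v = [eta v].  Such a c exists because A[2] is elementary abelian: writing
  A[2] = F/R with F free abelian, the assignment x + x \<mapsto> [eta (p x)] on 2F extends to R
  (again by Zorn), and c is obtained from the section v \<mapsto> [v] - [1].
\<close>

lemma hom_one_group: "h \<in> hom G H \<Longrightarrow> group G \<Longrightarrow> group H \<Longrightarrow> h \<one>\<^bsub>G\<^esub> = \<one>\<^bsub>H\<^esub>"
  by (simp add: group_hom.hom_one group_hom.intro group_hom_axioms.intro)

lemma hom_inv_group:
  "h \<in> hom G H \<Longrightarrow> group G \<Longrightarrow> group H \<Longrightarrow> x \<in> carrier G \<Longrightarrow> h (inv\<^bsub>G\<^esub> x) = inv\<^bsub>H\<^esub> (h x)"
  by (simp add: group_hom.hom_inv group_hom.intro group_hom_axioms.intro)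

lemma (in group) mult_inv_eq_one_iff: "x \<in> carrier G \<Longrightarrow> y \<in> carrier G \<Longrightarrow> x \<otimes> inv y = \<one> \<longleftrightarrow> x = y"
  by (metis inv_solve_right one_closed l_one)

lemma hom_twice: "h \<in> hom G H \<Longrightarrow> c \<in> twice G \<Longrightarrow> h c \<in> twice H"
  by (auto simp: twice_def hom_mult hom_in_carrier)

lemma carrier_tors2 [simp]: "carrier (tors2 G) = two_torsion G"
  and mult_tors2 [simp]: "mult (tors2 G) = mult G"
  and one_tors2 [simp]: "one (tors2 G) = one G"
  by (simp_all add: tors2_def)

lemma carrier_mod2: "carrier (mod2 G) = rcosets\<^bsub>G\<^esub> (twice G)"
  by (simp add: mod2_def FactGroup_def)

lemma one_mod2: "\<one>\<^bsub>mod2 G\<^esub> = twice G"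
  by (simp add: mod2_def)

definition mod2_rep :: "'a set \<Rightarrow> 'a" where
  "mod2_rep X = (SOME x. x \<in> X)"

lemma comm_group_subgroup: "comm_group G \<Longrightarrow> subgroup H G \<Longrightarrow> comm_group (G\<lparr>carrier := H\<rparr>)"
  by (rule group.group_comm_groupI[OF subgroup.subgroup_is_group])
    (auto simp: comm_group.axioms(2) comm_monoid.m_comm[OF comm_group.axioms(1)]
      subgroup.mem_carrier)

locale comm_group_rec = comm_group G for G :: "'a monoid" (structure)

context comm_group_rec
begin

lemma square_mult: "x \<in> carrier G \<Longrightarrow> y \<in> carrier G \<Longrightarrow> (x \<otimes> y) \<otimes> (x \<otimes> y) = (x \<otimes> x) \<otimes> (y \<otimes> y)"
  by (metis m_assoc m_closed m_lcomm)

lemma subgroup_twice: "subgroup (twice G) G"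
proof (rule subgroupI)
  fix a b assume "a \<in> twice G" "b \<in> twice G"
  then obtain x y where xy: "x \<in> carrier G" "y \<in> carrier G" "a = x \<otimes> x" "b = y \<otimes> y"
    by (auto simp: twice_def)
  show "inv a \<in> twice G"
    unfolding twice_def using xy by (auto intro!: exI[of _ "inv x"] simp: inv_mult)
  show "a \<otimes> b \<in> twice G"
    unfolding twice_def using xy by (auto intro!: exI[of _ "x \<otimes> y"] simp: square_mult)
qed (auto simp: twice_def)

lemma square_in_twice: "x \<in> carrier G \<Longrightarrow> x \<otimes> x \<in> twice G"
  by (auto simp: twice_def)

lemma subgroup_two_torsion: "subgroup (two_torsion G) G"
  by (rule subgroupI) (auto simp: two_torsion_def square_mult inv_mult simp flip: inv_mult_group)

lemma comm_group_tors2: "comm_group (tors2 G)"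
  unfolding tors2_def by (rule comm_group_subgroup[OF comm_group_axioms subgroup_two_torsion])

lemma comm_group_mod2: "comm_group (mod2 G)"
  unfolding mod2_def by (rule abelian_FactGroup[OF subgroup_twice])

lemma mod2_mult_closed:
  "X \<in> carrier (mod2 G) \<Longrightarrow> Y \<in> carrier (mod2 G) \<Longrightarrow> X \<otimes>\<^bsub>mod2 G\<^esub> Y \<in> carrier (mod2 G)"
  using comm_group_mod2 by (simp add: comm_group_def group_def monoid.m_closed)

lemma twice_in_mod2: "twice G \<in> carrier (mod2 G)"
  using comm_group_mod2 monoid.one_closed[of "mod2 G"]
    by (simp add: comm_group_def group_def one_mod2)

lemma mod2_mult_one: "X \<in> carrier (mod2 G) \<Longrightarrow> X \<otimes>\<^bsub>mod2 G\<^esub> twice G = X"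
  and mod2_one_mult: "X \<in> carrier (mod2 G) \<Longrightarrow> twice G \<otimes>\<^bsub>mod2 G\<^esub> X = X"
  using comm_group_mod2 monoid.r_one[of "mod2 G"] monoid.l_one[of "mod2 G"]
  by (simp_all add: comm_group_def group_def one_mod2)

lemma mod2_class_closed: "c \<in> carrier G \<Longrightarrow> twice G #> c \<in> carrier (mod2 G)"
  by (simp add: carrier_mod2 rcosetsI subgroup_twice subgroup.subset)

lemma mod2_class_mult:
  "c \<in> carrier G \<Longrightarrow> d \<in> carrier G \<Longrightarrow>
     (twice G #> c) \<otimes>\<^bsub>mod2 G\<^esub> (twice G #> d) = twice G #> (c \<otimes> d)"
  unfolding mod2_def
  by (simp add: normal.rcos_sum[OF subgroup_imp_normal[OF subgroup_twice]])

lemma mod2_elem_class: "X \<in> carrier (mod2 G) \<Longrightarrow> \<exists>c\<in>carrier G. X = twice G #> c"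
  by (auto simp: carrier_mod2 RCOSETS_def)

lemma mod2_class_of_mem: "X \<in> carrier (mod2 G) \<Longrightarrow> x \<in> X \<Longrightarrow> twice G #> x = X"
  by (metis mod2_elem_class repr_independence subgroup_twice)

lemma mod2_rep_mem: "X \<in> carrier (mod2 G) \<Longrightarrow> mod2_rep X \<in> X"
  unfolding mod2_rep_def by (metis mod2_elem_class rcos_self subgroup_twice someI)

lemma mod2_rep_closed: "X \<in> carrier (mod2 G) \<Longrightarrow> mod2_rep X \<in> carrier G"
  by (metis mod2_elem_class mod2_rep_mem r_coset_subset_G subgroup_twice subgroup.subset subsetD)

lemma mod2_class_rep: "X \<in> carrier (mod2 G) \<Longrightarrow> twice G #> mod2_rep X = X"
  by (simp add: mod2_class_of_mem mod2_rep_mem)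

lemma inj_on_mod2_rep: "inj_on mod2_rep (carrier (mod2 G))"
  by (rule inj_on_inverseI[where g = "\<lambda>x. twice G #> x"]) (rule mod2_class_rep)

lemma mod2_class_eq_iff:
  "c \<in> carrier G \<Longrightarrow> d \<in> carrier G \<Longrightarrow> twice G #> c = twice G #> d \<longleftrightarrow> c \<otimes> inv d \<in> twice G"
  by (metis repr_independence rcos_self subgroup.rcos_module_imp subgroup.rcos_module_rev
        subgroup_twice is_group)

lemma mod2_class_eq_one_iff: "c \<in> carrier G \<Longrightarrow> twice G #> c = twice G \<longleftrightarrow> c \<in> twice G"
  using mod2_class_eq_iff[of c \<one>] by (simp add: coset_mult_one subgroup_twice subgroup.subset)

lemma mod2_square: "X \<in> carrier (mod2 G) \<Longrightarrow> X \<otimes>\<^bsub>mod2 G\<^esub> X = \<one>\<^bsub>mod2 G\<^esub>"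
  by (metis mod2_class_mult mod2_class_eq_one_iff m_closed mod2_elem_class one_mod2 square_in_twice)

end

definition induced_chi :: "('a, 'b, 'c) eeed \<Rightarrow> 'c set \<Rightarrow> 'b" where
  "induced_chi N X = chi N (mod2_rep X)"

lemma xi_eq:
  "xi N N' u = (hom_zero (grpA N) (grpA N'), (\<lambda>b\<in>carrier (grpB N). induced_chi N' (u (psi N b))),
                hom_zero (grpC N) (grpC N'))"
  by (simp add: xi_def induced_chi_def mod2_rep_def)

locale exact_eta_diagram =
  fixes N :: "('a, 'b, 'c) eeed"
  assumes is_eeed: "is_eeed N"
begin

sublocale A: comm_group_rec "grpA N"
  using is_eeed by (simp add: is_eeed_def is_eed_def comm_group_rec_def)
sublocale B: comm_group_rec "grpB N"
  using is_eeed by (simp add: is_eeed_def is_eed_def comm_group_rec_def)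
sublocale C: comm_group_rec "grpC N"
  using is_eeed by (simp add: is_eeed_def is_eed_def comm_group_rec_def)

lemma eta_hom: "eta N \<in> hom (grpA N) (grpC N)"
  and chi_hom: "chi N \<in> hom (grpC N) (grpB N)"
  and psi_hom: "psi N \<in> hom (grpB N) (grpA N)"
  and eta_square: "a \<in> carrier (grpA N) \<Longrightarrow> eta N (a \<otimes>\<^bsub>grpA N\<^esub> a) = \<one>\<^bsub>grpC N\<^esub>"
  and psi_chi: "c \<in> carrier (grpC N) \<Longrightarrow> psi N (chi N c) = \<one>\<^bsub>grpA N\<^esub>"
  and chi_eta_psi: "b \<in> carrier (grpB N) \<Longrightarrow> chi N (eta N (psi N b)) = b \<otimes>\<^bsub>grpB N\<^esub> b"
  and psi_onto: "a \<in> two_torsion (grpA N) \<Longrightarrow> \<exists>b\<in>carrier (grpB N). psi N b = a"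
  and ker_psi: "b \<in> carrier (grpB N) \<Longrightarrow> psi N b = \<one>\<^bsub>grpA N\<^esub> \<Longrightarrow> \<exists>c\<in>carrier (grpC N). chi N c = b"
  and ker_chi: "c \<in> carrier (grpC N) \<Longrightarrow> chi N c = \<one>\<^bsub>grpB N\<^esub> \<Longrightarrow> c \<in> twice (grpC N)"
  using is_eeed by (auto simp: is_eeed_def is_eed_def eed_exact_def)

lemma eta_closed [simp]: "a \<in> carrier (grpA N) \<Longrightarrow> eta N a \<in> carrier (grpC N)"
  and chi_closed [simp]: "c \<in> carrier (grpC N) \<Longrightarrow> chi N c \<in> carrier (grpB N)"
  and psi_closed [simp]: "b \<in> carrier (grpB N) \<Longrightarrow> psi N b \<in> carrier (grpA N)"
  using eta_hom chi_hom psi_hom by (simp_all add: hom_in_carrier)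

lemma chi_mult: "c \<in> carrier (grpC N) \<Longrightarrow> d \<in> carrier (grpC N) \<Longrightarrow>
    chi N (c \<otimes>\<^bsub>grpC N\<^esub> d) = chi N c \<otimes>\<^bsub>grpB N\<^esub> chi N d"
  and psi_mult: "b \<in> carrier (grpB N) \<Longrightarrow> b' \<in> carrier (grpB N) \<Longrightarrow>
    psi N (b \<otimes>\<^bsub>grpB N\<^esub> b') = psi N b \<otimes>\<^bsub>grpA N\<^esub> psi N b'"
  using chi_hom psi_hom by (simp_all add: hom_mult)

lemma eta_one [simp]: "eta N \<one>\<^bsub>grpA N\<^esub> = \<one>\<^bsub>grpC N\<^esub>"
  and chi_one [simp]: "chi N \<one>\<^bsub>grpC N\<^esub> = \<one>\<^bsub>grpB N\<^esub>"
  and psi_one [simp]: "psi N \<one>\<^bsub>grpB N\<^esub> = \<one>\<^bsub>grpA N\<^esub>"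
  using eta_hom chi_hom psi_hom by (simp_all add: hom_one_group A.is_group B.is_group C.is_group)

lemma chi_inv: "c \<in> carrier (grpC N) \<Longrightarrow> chi N (inv\<^bsub>grpC N\<^esub> c) = inv\<^bsub>grpB N\<^esub> (chi N c)"
  and psi_inv: "b \<in> carrier (grpB N) \<Longrightarrow> psi N (inv\<^bsub>grpB N\<^esub> b) = inv\<^bsub>grpA N\<^esub> (psi N b)"
  using chi_hom psi_hom by (simp_all add: hom_inv_group A.is_group B.is_group C.is_group)

lemma psi_two_torsion: "b \<in> carrier (grpB N) \<Longrightarrow> psi N b \<in> two_torsion (grpA N)"
  using psi_chi[of "eta N (psi N b)"] by (simp add: two_torsion_def chi_eta_psi psi_mult)

lemma chi_square: "c \<in> carrier (grpC N) \<Longrightarrow> chi N c \<otimes>\<^bsub>grpB N\<^esub> chi N c = \<one>\<^bsub>grpB N\<^esub>"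
  using chi_eta_psi[of "chi N c"] by (simp add: psi_chi)

lemma chi_twice: "c \<in> twice (grpC N) \<Longrightarrow> chi N c = \<one>\<^bsub>grpB N\<^esub>"
  by (auto simp: twice_def chi_mult chi_square)

lemma chi_eq_iff_mod2_class_eq:
  assumes "c \<in> carrier (grpC N)" "d \<in> carrier (grpC N)"
  shows "chi N c = chi N d \<longleftrightarrow> twice (grpC N) #>\<^bsub>grpC N\<^esub> c = twice (grpC N) #>\<^bsub>grpC N\<^esub> d"
proof -
  have "chi N c = chi N d \<longleftrightarrow> chi N (c \<otimes>\<^bsub>grpC N\<^esub> inv\<^bsub>grpC N\<^esub> d) = \<one>\<^bsub>grpB N\<^esub>"
    using assms by (simp add: chi_mult chi_inv B.mult_inv_eq_one_iff)
  also have "\<dots> \<longleftrightarrow> c \<otimes>\<^bsub>grpC N\<^esub> inv\<^bsub>grpC N\<^esub> d \<in> twice (grpC N)"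
    using assms chi_twice ker_chi by blast
  finally show ?thesis
    using assms C.mod2_class_eq_iff by simp
qed

lemma induced_chi_class [simp]:
  "c \<in> carrier (grpC N) \<Longrightarrow> induced_chi N (twice (grpC N) #>\<^bsub>grpC N\<^esub> c) = chi N c"
  unfolding induced_chi_def
  by (metis C.mod2_class_closed C.mod2_class_rep C.mod2_rep_closed chi_eq_iff_mod2_class_eq)

lemma induced_chi_closed [simp]:
  "X \<in> carrier (mod2 (grpC N)) \<Longrightarrow> induced_chi N X \<in> carrier (grpB N)"
  by (simp add: induced_chi_def C.mod2_rep_closed)

lemma psi_induced_chi [simp]:
  "X \<in> carrier (mod2 (grpC N)) \<Longrightarrow> psi N (induced_chi N X) = \<one>\<^bsub>grpA N\<^esub>"
  by (simp add: induced_chi_def C.mod2_rep_closed psi_chi)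

lemma induced_chi_mult:
  assumes "X \<in> carrier (mod2 (grpC N))" "Y \<in> carrier (mod2 (grpC N))"
  shows "induced_chi N (X \<otimes>\<^bsub>mod2 (grpC N)\<^esub> Y) = induced_chi N X \<otimes>\<^bsub>grpB N\<^esub> induced_chi N Y"
  using assms C.mod2_class_mult[of "mod2_rep X" "mod2_rep Y"]
  by (simp add: C.mod2_class_rep C.mod2_rep_closed chi_mult
      induced_chi_def[of N X] induced_chi_def[of N Y])

lemma induced_chi_one [simp]: "induced_chi N (twice (grpC N)) = \<one>\<^bsub>grpB N\<^esub>"
  using induced_chi_class[of "\<one>\<^bsub>grpC N\<^esub>"]
  by (simp add: C.coset_mult_one C.subgroup_twice subgroup.subset)

lemma induced_chi_inj:
  "X \<in> carrier (mod2 (grpC N)) \<Longrightarrow> Y \<in> carrier (mod2 (grpC N)) \<Longrightarrow>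
     induced_chi N X = induced_chi N Y \<Longrightarrow> X = Y"
  unfolding induced_chi_def by (metis chi_eq_iff_mod2_class_eq C.mod2_class_rep C.mod2_rep_closed)

end

lemma pi_obj_simps [simp]:
  "edA (pi_obj N) = grpA N" "edC (pi_obj N) = grpC N" "edEta (pi_obj N) = eta N"
  by (simp_all add: pi_obj_def)

lemma pi_mor_eeed_add:
  "pi_mor (eeed_add N N' m m') = ed_add (pi_obj N) (pi_obj N') (pi_mor m) (pi_mor m')"
  by (cases m; cases m') (simp add: pi_mor_def eeed_add_def ed_add_def)

lemma pi_mor_eeed_comp:
  "pi_mor (eeed_comp M m' m) = ed_comp (pi_obj M) (pi_mor m') (pi_mor m)"
  by (cases m; cases m') (simp add: pi_mor_def eeed_comp_def ed_comp_def)

lemma pi_mor_eeed_hom: "m \<in> eeed_hom N N' \<Longrightarrow> pi_mor m \<in> ed_hom (pi_obj N) (pi_obj N')"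
  by (auto simp: pi_mor_def eeed_hom_def ed_hom_def)

lemma eeed_homD:
  assumes "(f, g, h) \<in> eeed_hom N N'"
  shows "f \<in> hom (grpA N) (grpA N')" "f \<in> extensional (carrier (grpA N))"
    "g \<in> hom (grpB N) (grpB N')" "g \<in> extensional (carrier (grpB N))"
    "h \<in> hom (grpC N) (grpC N')" "h \<in> extensional (carrier (grpC N))"
    "\<And>b. b \<in> carrier (grpB N) \<Longrightarrow> f (psi N b) = psi N' (g b)"
    "\<And>a. a \<in> carrier (grpA N) \<Longrightarrow> h (eta N a) = eta N' (f a)"
    "\<And>c. c \<in> carrier (grpC N) \<Longrightarrow> g (chi N c) = chi N' (h c)"
  using assms by (auto simp: eeed_hom_def ghom_def)

lemma hom_zero_in_ghom: "group G \<Longrightarrow> group H \<Longrightarrow> hom_zero G H \<in> ghom G H"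
  by (auto simp: hom_zero_def ghom_def hom_def group.is_monoid monoid.m_closed)

lemma hom_add_hom_zero: "group H \<Longrightarrow> hom_add G H (hom_zero G H) (hom_zero G H) = hom_zero G H"
  by (auto simp: hom_add_def hom_zero_def group.is_monoid intro!: restrict_ext)

lemma ghom_closed: "u \<in> ghom G H \<Longrightarrow> x \<in> carrier G \<Longrightarrow> u x \<in> carrier H"
  by (auto simp: ghom_def hom_in_carrier)

lemma ghom_mult: "u \<in> ghom G H \<Longrightarrow> x \<in> carrier G \<Longrightarrow> y \<in> carrier G \<Longrightarrow>
    u (x \<otimes>\<^bsub>G\<^esub> y) = u x \<otimes>\<^bsub>H\<^esub> u y"
  by (auto simp: ghom_def hom_mult)

locale exact_eta_diagram_pair = N: exact_eta_diagram N + N': exact_eta_diagram N'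
  for N :: "('a, 'b, 'c) eeed" and N' :: "('a2, 'b2, 'c2) eeed"
begin

abbreviation "torsion_hom \<equiv> ghom (tors2 (grpA N)) (mod2 (grpC N'))"

lemma torsion_hom_closed:
  "u \<in> torsion_hom \<Longrightarrow> a \<in> two_torsion (grpA N) \<Longrightarrow> u a \<in> carrier (mod2 (grpC N'))"
  by (simp add: ghom_closed)

lemma torsion_hom_mult: "u \<in> torsion_hom \<Longrightarrow> a \<in> two_torsion (grpA N) \<Longrightarrow> a' \<in> two_torsion (grpA N) \<Longrightarrow>
    u (a \<otimes>\<^bsub>grpA N\<^esub> a') = u a \<otimes>\<^bsub>mod2 (grpC N')\<^esub> u a'"
  using ghom_mult[of u "tors2 (grpA N)"] by simp

lemma xi_in_eeed_hom:
  assumes u: "u \<in> torsion_hom"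
  shows "xi N N' u \<in> eeed_hom N N'"
proof -
  have u_one: "u \<one>\<^bsub>grpA N\<^esub> = twice (grpC N')"
    using hom_one_group[of u "tors2 (grpA N)" "mod2 (grpC N')"] u N.A.comm_group_tors2
      N'.C.comm_group_mod2 by (simp add: ghom_def comm_group.axioms(2) one_mod2)
  let ?g = "\<lambda>b\<in>carrier (grpB N). induced_chi N' (u (psi N b))"
  have u_psi: "b \<in> carrier (grpB N) \<Longrightarrow> u (psi N b) \<in> carrier (mod2 (grpC N'))" for b
    by (simp add: u N.psi_two_torsion torsion_hom_closed)
  have "?g \<in> hom (grpB N) (grpB N')"
    by (rule homI)
      (simp_all add: u u_psi N.psi_two_torsion N.psi_mult torsion_hom_mult N'.induced_chi_mult)
  moreover have "psi N' (?g b) = \<one>\<^bsub>grpA N'\<^esub>" if "b \<in> carrier (grpB N)" for b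
    using that by (simp add: u_psi)
  ultimately show ?thesis
    unfolding xi_eq eeed_hom_def
    using hom_zero_in_ghom[OF N.A.is_group N'.A.is_group]
      hom_zero_in_ghom[OF N.C.is_group N'.C.is_group]
    by (auto simp: ghom_def hom_zero_def N.psi_chi u_one)
qed

lemma xi_hom_add:
  assumes "u \<in> torsion_hom" "v \<in> torsion_hom"
  shows "xi N N' (hom_add (tors2 (grpA N)) (mod2 (grpC N')) u v)
    = eeed_add N N' (xi N N' u) (xi N N' v)"
proof -
  have "(\<lambda>b\<in>carrier (grpB N).
          induced_chi N' (hom_add (tors2 (grpA N)) (mod2 (grpC N')) u v (psi N b)))
     = hom_add (grpB N) (grpB N') (\<lambda>b\<in>carrier (grpB N). induced_chi N' (u (psi N b)))
          (\<lambda>b\<in>carrier (grpB N). induced_chi N' (v (psi N b)))"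
    using assms
    by (auto simp: hom_add_def N.psi_two_torsion torsion_hom_closed N'.induced_chi_mult
        intro!: restrict_ext)
  then show ?thesis
    by (simp add: xi_eq eeed_add_def hom_add_hom_zero N'.A.is_group N'.C.is_group)
qed

lemma inj_on_xi: "inj_on (xi N N') torsion_hom"
proof (rule inj_onI)
  fix u v assume u: "u \<in> torsion_hom" and v: "v \<in> torsion_hom" and eq: "xi N N' u = xi N N' v"
  have "u a = v a" if a: "a \<in> two_torsion (grpA N)" for a
  proof -
    obtain b where b: "b \<in> carrier (grpB N)" "psi N b = a"
      using N.psi_onto[OF a] by blast
    have "induced_chi N' (u a) = induced_chi N' (v a)"
      using fun_cong[OF arg_cong[where f = "fst \<circ> snd", OF eq], of b] b by (simp add: xi_eq)
    then show ?thesis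
      using N'.induced_chi_inj u v a by (simp add: torsion_hom_closed)
  qed
  then show "u = v"
    using u v by (auto simp: ghom_def intro: extensionalityI)
qed

lemma kernel_pi_factors_through_psi:
  assumes m: "(hom_zero (grpA N) (grpA N'), g, hom_zero (grpC N) (grpC N')) \<in> eeed_hom N N'"
    and b: "b \<in> carrier (grpB N)" "b' \<in> carrier (grpB N)" "psi N b = psi N b'"
  shows "g b = g b'"
proof -
  note D = eeed_homD[OF m]
  have "psi N (b \<otimes>\<^bsub>grpB N\<^esub> inv\<^bsub>grpB N\<^esub> b') = \<one>\<^bsub>grpA N\<^esub>"
    using b by (simp add: N.psi_mult N.psi_inv N.A.mult_inv_eq_one_iff)
  then obtain c where "c \<in> carrier (grpC N)" "chi N c = b \<otimes>\<^bsub>grpB N\<^esub> inv\<^bsub>grpB N\<^esub> b'"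
    using N.ker_psi[of "b \<otimes>\<^bsub>grpB N\<^esub> inv\<^bsub>grpB N\<^esub> b'"] b by auto
  then have "g (b \<otimes>\<^bsub>grpB N\<^esub> inv\<^bsub>grpB N\<^esub> b') = \<one>\<^bsub>grpB N'\<^esub>"
    using D(9)[of c] by (simp add: hom_zero_def)
  then have "g b \<otimes>\<^bsub>grpB N'\<^esub> inv\<^bsub>grpB N'\<^esub> g b' = \<one>\<^bsub>grpB N'\<^esub>"
    using b by (simp add: hom_mult[OF D(3)] hom_inv_group[OF D(3) N.B.is_group N'.B.is_group])
  then show ?thesis
    using b hom_in_carrier[OF D(3)] N'.B.mult_inv_eq_one_iff by blast
qed

lemma kernel_pi_in_image_induced_chi:
  assumes m: "(hom_zero (grpA N) (grpA N'), g, hom_zero (grpC N) (grpC N')) \<in> eeed_hom N N'"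
    and b: "b \<in> carrier (grpB N)"
  shows "\<exists>X\<in>carrier (mod2 (grpC N')). induced_chi N' X = g b"
proof -
  note D = eeed_homD[OF m]
  have "psi N' (g b) = \<one>\<^bsub>grpA N'\<^esub>"
    using D(7) b by (simp add: hom_zero_def)
  then obtain c where "c \<in> carrier (grpC N')" "chi N' c = g b"
    using N'.ker_psi hom_in_carrier[OF D(3) b] by blast
  then show ?thesis
    using N'.C.mod2_class_closed by force
qed

lemma kernel_pi_in_image_xi:
  assumes m: "(hom_zero (grpA N) (grpA N'), g, hom_zero (grpC N) (grpC N')) \<in> eeed_hom N N'"
  shows "\<exists>u\<in>torsion_hom. xi N N' u = (hom_zero (grpA N) (grpA N'), g, hom_zero (grpC N) (grpC N'))"
proof -
  note D = eeed_homD[OF m]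
  define u where "u a = (SOME X. X \<in> carrier (mod2 (grpC N')) \<and>
      (\<exists>b\<in>carrier (grpB N). psi N b = a \<and> induced_chi N' X = g b))" for a
  have u_spec: "u a \<in> carrier (mod2 (grpC N')) \<and> induced_chi N' (u a) = g b"
    if "b \<in> carrier (grpB N)" "psi N b = a" for a b
  proof -
    have "\<exists>X. X \<in> carrier (mod2 (grpC N')) \<and>
        (\<exists>b\<in>carrier (grpB N). psi N b = a \<and> induced_chi N' X = g b)"
      using kernel_pi_in_image_induced_chi[OF m] that by blast
    then show ?thesis
      unfolding u_def using kernel_pi_factors_through_psi[OF m] that by (smt (verit) someI_ex)
  qed
  let ?u = "restrict u (two_torsion (grpA N))"
  have "?u \<in> torsion_hom"
  proof -
    have "u (a \<otimes>\<^bsub>grpA N\<^esub> a') = u a \<otimes>\<^bsub>mod2 (grpC N')\<^esub> u a'"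
      if a: "a \<in> two_torsion (grpA N)" and a': "a' \<in> two_torsion (grpA N)" for a a'
    proof -
      obtain b where b: "b \<in> carrier (grpB N)" "psi N b = a"
        using N.psi_onto[OF a] by blast
      obtain b' where b': "b' \<in> carrier (grpB N)" "psi N b' = a'"
        using N.psi_onto[OF a'] by blast
      have bb': "b \<otimes>\<^bsub>grpB N\<^esub> b' \<in> carrier (grpB N)" "psi N (b \<otimes>\<^bsub>grpB N\<^esub> b') = a \<otimes>\<^bsub>grpA N\<^esub> a'"
        using b b' by (simp_all add: N.psi_mult)
      have "induced_chi N' (u (a \<otimes>\<^bsub>grpA N\<^esub> a')) = g b \<otimes>\<^bsub>grpB N'\<^esub> g b'"
        using u_spec[OF bb'] hom_mult[OF D(3) b(1) b'(1)] by simp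
      also have "\<dots> = induced_chi N' (u a \<otimes>\<^bsub>mod2 (grpC N')\<^esub> u a')"
        using u_spec[OF b] u_spec[OF b'] by (simp add: N'.induced_chi_mult)
      finally show ?thesis
        using u_spec[OF bb'] u_spec[OF b] u_spec[OF b']
        by (intro N'.induced_chi_inj) (simp_all add: N'.C.mod2_mult_closed)
    qed
    moreover have "u a \<in> carrier (mod2 (grpC N'))" if "a \<in> two_torsion (grpA N)" for a
      using N.psi_onto[OF that] u_spec by blast
    ultimately show ?thesis
      using subgroup.m_closed[OF N.A.subgroup_two_torsion] by (auto simp: ghom_def intro!: homI)
  qed
  moreover have "(\<lambda>b\<in>carrier (grpB N). induced_chi N' (?u (psi N b))) = g"
  proof (rule extensionalityI[OF _ D(4)])
    fix b assume "b \<in> carrier (grpB N)"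
    then show "(\<lambda>b\<in>carrier (grpB N). induced_chi N' (?u (psi N b))) b = g b"
      using u_spec[of b] by (simp add: N.psi_two_torsion)
  qed simp
  ultimately show ?thesis
    unfolding xi_eq by (intro bexI[of _ ?u]) simp_all
qed

lemma image_xi:
  "xi N N' ` torsion_hom = {m \<in> eeed_hom N N'. pi_mor m = ed_zero (pi_obj N) (pi_obj N')}"
proof (intro equalityI subsetI)
  fix m assume "m \<in> xi N N' ` torsion_hom"
  then show "m \<in> {m \<in> eeed_hom N N'. pi_mor m = ed_zero (pi_obj N) (pi_obj N')}"
    using xi_in_eeed_hom by (auto simp: xi_eq pi_mor_def ed_zero_def)
next
  fix m assume "m \<in> {m \<in> eeed_hom N N'. pi_mor m = ed_zero (pi_obj N) (pi_obj N')}"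
  then show "m \<in> xi N N' ` torsion_hom"
    using kernel_pi_in_image_xi
    by (cases m) (force simp: pi_mor_def ed_zero_def)
qed

end

lemma iso_if_compose_eq_id:
  assumes "f \<in> hom G H" "f' \<in> carrier H \<rightarrow> carrier G"
    "compose (carrier G) f' f = (\<lambda>x\<in>carrier G. x)" "compose (carrier H) f f' = (\<lambda>y\<in>carrier H. y)"
  shows "f \<in> iso G H"
proof -
  have "f' (f x) = x" if "x \<in> carrier G" for x
    using fun_cong[OF assms(3), of x] that by (simp add: compose_def)
  moreover have "f (f' y) = y" if "y \<in> carrier H" for y
    using fun_cong[OF assms(4), of y] that by (simp add: compose_def)
  ultimately have "bij_betw f (carrier G) (carrier H)"
    using assms(1,2) by (intro bij_betw_byWitness[of _ f']) (auto simp: hom_in_carrier)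
  then show ?thesis
    using assms(1) by (simp add: iso_def)
qed

lemma ed_iso_imp_iso:
  assumes "ed_iso E E' (f, h)"
  shows "f \<in> iso (edA E) (edA E')" "h \<in> iso (edC E) (edC E')"
proof -
  obtain f' h' where m': "(f', h') \<in> ed_hom E' E"
    and c: "ed_comp E (f', h') (f, h) = ed_id E" "ed_comp E' (f, h) (f', h') = ed_id E'"
    using assms unfolding ed_iso_def by auto
  have "f \<in> hom (edA E) (edA E')" "h \<in> hom (edC E) (edC E')"
    "f' \<in> hom (edA E') (edA E)" "h' \<in> hom (edC E') (edC E)"
    using assms m' by (auto simp: ed_iso_def ed_hom_def ghom_def)
  then show "f \<in> iso (edA E) (edA E')" "h \<in> iso (edC E) (edC E')"
    using c by (auto simp: ed_comp_def ed_id_def hom_def intro!: iso_if_compose_eq_id)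
qed

lemma iso_two_torsion:
  assumes f: "f \<in> iso G H" and "group G" "group H" and y: "y \<in> two_torsion H"
  shows "y \<in> f ` two_torsion G"
proof -
  have "y \<in> f ` carrier G"
    using f y by (simp add: iso_def bij_betw_def two_torsion_def)
  then obtain a where a: "a \<in> carrier G" "f a = y"
    by (auto simp: image_iff)
  have "f (a \<otimes>\<^bsub>G\<^esub> a) = f \<one>\<^bsub>G\<^esub>"
    using a y hom_mult[of f G H] hom_one_group[of f G H] f assms(2,3)
    by (simp add: iso_def two_torsion_def)
  then have "a \<otimes>\<^bsub>G\<^esub> a = \<one>\<^bsub>G\<^esub>"
    using a(1) f assms(2)
      by (auto simp: iso_def bij_betw_def inj_on_def group.is_monoid monoid.m_closed)
  then show ?thesis
    using a by (intro image_eqI[of _ f a]) (simp_all add: two_torsion_def)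
qed

definition iso_inv :: "('a, 'm) monoid_scheme \<Rightarrow> ('b, 'n) monoid_scheme \<Rightarrow> ('a \<Rightarrow> 'b) \<Rightarrow> 'b \<Rightarrow> 'a" where
  "iso_inv G H k = restrict (inv_into (carrier G) k) (carrier H)"

lemma iso_inv_inverse:
  assumes "k \<in> iso G H" "group G" "group H"
  shows "iso_inv G H k \<in> ghom H G"
    and "compose (carrier G) (iso_inv G H k) k = (\<lambda>x\<in>carrier G. x)"
    and "compose (carrier H) k (iso_inv G H k) = (\<lambda>y\<in>carrier H. y)"
    and "y \<in> carrier H \<Longrightarrow> iso_inv G H k y = x \<longleftrightarrow> x \<in> carrier G \<and> k x = y"
    and "y \<in> carrier H \<Longrightarrow> k (iso_inv G H k y) = y"
proof -
  have bij: "bij_betw k (carrier G) (carrier H)"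
    using assms(1) by (simp add: iso_def)
  have "inv_into (carrier G) k \<in> hom H G"
    using group.iso_set_sym[OF assms(2,1)] by (simp add: iso_def)
  then show "iso_inv G H k \<in> ghom H G"
    using assms(3) by (auto simp: iso_inv_def ghom_def hom_def group.is_monoid monoid.m_closed)
  show "compose (carrier G) (iso_inv G H k) k = (\<lambda>x\<in>carrier G. x)"
    using bij by (auto simp: compose_def iso_inv_def bij_betw_def inv_into_f_f intro!: restrict_ext)
  show "compose (carrier H) k (iso_inv G H k) = (\<lambda>y\<in>carrier H. y)"
    using bij by (auto simp: compose_def iso_inv_def bij_betw_def f_inv_into_f intro!: restrict_ext)
  show "iso_inv G H k y = x \<longleftrightarrow> x \<in> carrier G \<and> k x = y" if "y \<in> carrier H"
    using bij that
    by (auto simp: iso_inv_def bij_betw_def inv_into_f_f f_inv_into_f inv_into_into)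
  show "k (iso_inv G H k y) = y" if "y \<in> carrier H"
    using bij that by (simp add: iso_inv_def bij_betw_def f_inv_into_f)
qed

context exact_eta_diagram_pair
begin

lemma eeed_hom_middle_kernel:
  assumes m: "(f, g, h) \<in> eeed_hom N N'"
    and f: "inj_on f (carrier (grpA N))" and h: "h \<in> iso (grpC N) (grpC N')"
    and x: "x \<in> carrier (grpB N)" "g x = \<one>\<^bsub>grpB N'\<^esub>"
  shows "x = \<one>\<^bsub>grpB N\<^esub>"
proof -
  note D = eeed_homD[OF m]
  have "f (psi N x) = f \<one>\<^bsub>grpA N\<^esub>"
    using D(7) x hom_one_group[OF D(1) N.A.is_group N'.A.is_group] by simp
  then have "psi N x = \<one>\<^bsub>grpA N\<^esub>"
    using f x by (auto dest: inj_onD)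
  then obtain c where c: "c \<in> carrier (grpC N)" "chi N c = x"
    using N.ker_psi x by blast
  then have "h c \<in> twice (grpC N')"
    using D(9)[of c] x by (intro N'.ker_chi) (simp_all add: hom_in_carrier[OF D(5)])
  then obtain d where d: "d \<in> carrier (grpC N')" "h c = d \<otimes>\<^bsub>grpC N'\<^esub> d"
    by (auto simp: twice_def)
  have "d \<in> h ` carrier (grpC N)"
    using d(1) h by (simp add: iso_def bij_betw_def)
  then obtain e where e: "e \<in> carrier (grpC N)" "h e = d"
    by (auto simp: image_iff)
  have "h c = h (e \<otimes>\<^bsub>grpC N\<^esub> e)"
    using d e hom_mult[OF D(5)] by simp
  then have "c = e \<otimes>\<^bsub>grpC N\<^esub> e"
    using c e h by (auto simp: iso_def bij_betw_def dest: inj_onD)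
  then show ?thesis
    using c e N.chi_twice N.C.square_in_twice by metis
qed

lemma eeed_hom_middle_surj:
  assumes m: "(f, g, h) \<in> eeed_hom N N'"
    and f: "f \<in> iso (grpA N) (grpA N')" and h: "h ` carrier (grpC N) = carrier (grpC N')"
    and y: "y \<in> carrier (grpB N')"
  shows "y \<in> g ` carrier (grpB N)"
proof -
  note D = eeed_homD[OF m]
  obtain a where "a \<in> two_torsion (grpA N)" "f a = psi N' y"
    using iso_two_torsion[OF f N.A.is_group N'.A.is_group N'.psi_two_torsion[OF y]]
    by (auto simp: image_iff)
  moreover obtain b where "b \<in> carrier (grpB N)" "psi N b = a"
    using N.psi_onto calculation(1) by blast
  ultimately have b: "b \<in> carrier (grpB N)" "psi N' (g b) = psi N' y"
    using D(7) by auto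
  let ?x = "y \<otimes>\<^bsub>grpB N'\<^esub> inv\<^bsub>grpB N'\<^esub> g b"
  have "psi N' ?x = \<one>\<^bsub>grpA N'\<^esub>"
    using y b hom_in_carrier[OF D(3) b(1)] by (simp add: N'.psi_mult N'.psi_inv)
  then obtain c' where c': "c' \<in> carrier (grpC N')" "chi N' c' = ?x"
    using N'.ker_psi[of ?x] y hom_in_carrier[OF D(3) b(1)] by auto
  moreover have "c' \<in> h ` carrier (grpC N)"
    using c'(1) h by simp
  then obtain c where "c \<in> carrier (grpC N)" "h c = c'"
    by (auto simp: image_iff)
  ultimately have c: "c \<in> carrier (grpC N)" "g (chi N c) = ?x"
    using D(9) by auto
  have "g (chi N c \<otimes>\<^bsub>grpB N\<^esub> b) = ?x \<otimes>\<^bsub>grpB N'\<^esub> g b"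
    using c b hom_mult[OF D(3)] by simp
  also have "\<dots> = y"
    using y hom_in_carrier[OF D(3) b(1)] by (simp add: N'.B.m_assoc)
  finally show ?thesis
    using b c by (intro image_eqI[of _ g "chi N c \<otimes>\<^bsub>grpB N\<^esub> b"]) simp_all
qed

text \<open>The five lemma.\<close>
lemma eeed_hom_middle_iso:
  assumes m: "(f, g, h) \<in> eeed_hom N N'"
    and f: "f \<in> iso (grpA N) (grpA N')" and h: "h \<in> iso (grpC N) (grpC N')"
  shows "g \<in> iso (grpB N) (grpB N')"
proof -
  interpret g: group_hom "grpB N" "grpB N'" g
    using eeed_homD(3)[OF m]
      by (simp add: group_hom_def group_hom_axioms_def N.B.is_group N'.B.is_group)
  have "inj_on f (carrier (grpA N))" "h ` carrier (grpC N) = carrier (grpC N')"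
    using f h by (auto simp: iso_def bij_betw_def)
  then show ?thesis
    using eeed_hom_middle_kernel[OF m _ h] eeed_hom_middle_surj[OF m f] by (auto simp: g.iso_iff)
qed

lemma eeed_iso_if_components_iso:
  assumes m: "(f, g, h) \<in> eeed_hom N N'" and f: "f \<in> iso (grpA N) (grpA N')"
    and g: "g \<in> iso (grpB N) (grpB N')" and h: "h \<in> iso (grpC N) (grpC N')"
  shows "eeed_iso N N' (f, g, h)"
proof -
  note D = eeed_homD[OF m]
  note f' = iso_inv_inverse[OF f N.A.is_group N'.A.is_group]
    and g' = iso_inv_inverse[OF g N.B.is_group N'.B.is_group]
    and h' = iso_inv_inverse[OF h N.C.is_group N'.C.is_group]
  let ?f' = "iso_inv (grpA N) (grpA N') f" and ?g' = "iso_inv (grpB N) (grpB N') g"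
    and ?h' = "iso_inv (grpC N) (grpC N') h"
  have "(?f', ?g', ?h') \<in> eeed_hom N' N"
    unfolding eeed_hom_def
  proof (intro CollectI case_prodI conjI ballI)
    fix b assume "b \<in> carrier (grpB N')"
    then show "?f' (psi N' b) = psi N (?g' b)"
      using f'(4) g'(5) D(7) ghom_closed[OF g'(1)] by simp
  next
    fix a assume "a \<in> carrier (grpA N')"
    then show "?h' (eta N' a) = eta N (?f' a)"
      using h'(4) f'(5) D(8) ghom_closed[OF f'(1)] by simp
  next
    fix c assume "c \<in> carrier (grpC N')"
    then show "?g' (chi N' c) = chi N (?h' c)"
      using g'(4) h'(5) D(9) ghom_closed[OF h'(1)] by simp
  qed (use f' g' h' in auto)
  then show ?thesis
    using m f'(2,3) g'(2,3) h'(2,3) unfolding eeed_iso_def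
    by (intro conjI bexI) (simp_all add: eeed_comp_def eeed_id_def)
qed

lemma pi_reflects_iso:
  assumes "m \<in> eeed_hom N N'" "ed_iso (pi_obj N) (pi_obj N') (pi_mor m)"
  shows "eeed_iso N N' m"
proof -
  obtain f g h where m: "m = (f, g, h)"
    by (cases m)
  have "f \<in> iso (grpA N) (grpA N')" "h \<in> iso (grpC N) (grpC N')"
    using ed_iso_imp_iso[of "pi_obj N" "pi_obj N'" f h] assms(2) by (simp_all add: m pi_mor_def)
  then show ?thesis
    using assms(1) eeed_hom_middle_iso eeed_iso_if_components_iso by (simp add: m)
qed

end

lemma subgroup_Union_chain:
  assumes "group G" "\<C> \<noteq> {}" "subset.chain \<A> \<C>" "\<And>K. K \<in> \<C> \<Longrightarrow> subgroup K G"
  shows "subgroup (\<Union>\<C>) G"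
proof (rule group.subgroupI[OF assms(1)])
  obtain K where K: "K \<in> \<C>"
    using assms(2) by blast
  then show "\<Union>\<C> \<noteq> {}"
    using subgroup.one_closed[OF assms(4)[OF K]] by blast
  show "\<Union>\<C> \<subseteq> carrier G"
    using subgroup.subset[OF assms(4)] by blast
  show "inv\<^bsub>G\<^esub> x \<in> \<Union>\<C>" if x: "x \<in> \<Union>\<C>" for x
  proof -
    obtain K where "K \<in> \<C>" "x \<in> K"
      using x by blast
    then show ?thesis
      using subgroup.m_inv_closed[OF assms(4)] by blast
  qed
  show "x \<otimes>\<^bsub>G\<^esub> y \<in> \<Union>\<C>" if xy: "x \<in> \<Union>\<C>" "y \<in> \<Union>\<C>" for x y
  proof -
    obtain K where "K \<in> \<C>" "{x, y} \<subseteq> K"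
      using finite_subset_Union_chain[of "{x, y}" \<C> \<A>] xy assms(2,3) by auto
    then show ?thesis
      using subgroup.m_closed[OF assms(4)] by blast
  qed
qed

lemma (in comm_group) subgroup_adjoin_square_root:
  assumes K: "subgroup K G" and z: "z \<in> carrier G" "z \<otimes> z \<in> K"
  shows "subgroup (K \<union> (z <# K)) G"
proof -
  have K_carrier: "x \<in> K \<Longrightarrow> x \<in> carrier G" for x
    using K subgroup.subset by blast
  have zK: "x \<in> z <# K \<longleftrightarrow> (\<exists>k\<in>K. x = z \<otimes> k)" for x
    by (auto simp: l_coset_def)
  note K_m = subgroup.m_closed[OF K] and K_inv = subgroup.m_inv_closed[OF K]
  show ?thesis
  proof (rule subgroupI)
    show "K \<union> (z <# K) \<subseteq> carrier G"
      using K_carrier z by (auto simp: zK)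
    show "K \<union> (z <# K) \<noteq> {}"
      using subgroup.one_closed[OF K] by blast
  next
    fix x assume "x \<in> K \<union> (z <# K)"
    then consider "x \<in> K" | k where "k \<in> K" "x = z \<otimes> k"
      by (auto simp: zK)
    then show "inv x \<in> K \<union> (z <# K)"
    proof cases
      case (2 k)
      have k: "k \<in> carrier G"
        using 2 K_carrier by blast
      have "z \<otimes> (inv (z \<otimes> z) \<otimes> inv k) = (z \<otimes> inv z) \<otimes> (inv z \<otimes> inv k)"
        using z k by (simp add: inv_mult m_assoc[symmetric])
      also have "\<dots> = inv x"
        using 2 z k by (simp add: inv_mult m_comm)
      finally have "inv x = z \<otimes> (inv (z \<otimes> z) \<otimes> inv k)" ..
      then show ?thesis
        using 2 z K_inv K_m by (auto simp: zK)
    qed (use K_inv in blast)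
  next
    fix x y assume "x \<in> K \<union> (z <# K)" "y \<in> K \<union> (z <# K)"
    then consider "x \<in> K" "y \<in> K"
      | k l where "k \<in> K" "l \<in> K" "x = k" "y = z \<otimes> l"
      | k l where "k \<in> K" "l \<in> K" "x = z \<otimes> k" "y = l"
      | k l where "k \<in> K" "l \<in> K" "x = z \<otimes> k" "y = z \<otimes> l"
      by (auto simp: zK)
    then show "x \<otimes> y \<in> K \<union> (z <# K)"
    proof cases
      case (2 k l)
      then have "x \<otimes> y = z \<otimes> (k \<otimes> l)"
        using z K_carrier by (simp add: m_lcomm)
      then show ?thesis
        using 2 K_m by (auto simp: zK)
    next
      case (3 k l)
      then have "x \<otimes> y = z \<otimes> (k \<otimes> l)"
        using z K_carrier by (simp add: m_assoc)
      then show ?thesis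
        using 3 K_m by (auto simp: zK)
    next
      case (4 k l)
      then have "x \<otimes> y = (z \<otimes> z) \<otimes> (k \<otimes> l)"
        using z K_carrier by (simp add: m_ac)
      then show ?thesis
        using 4 z K_m by auto
    qed (use K_m in blast)
  qed
qed

lemma comm_group_DirProd: "comm_group G \<Longrightarrow> comm_group H \<Longrightarrow> comm_group (G \<times>\<times> H)"
  by (rule group.group_comm_groupI)
    (auto simp: DirProd_group comm_group.axioms(2) comm_monoid.m_comm[OF comm_group.axioms(1)]
      mult_DirProd')

definition extension_graph ::
    "'a monoid \<Rightarrow> 'b monoid \<Rightarrow> 'a set \<Rightarrow> ('a \<Rightarrow> 'b) \<Rightarrow> ('a \<Rightarrow> 'b \<Rightarrow> bool) \<Rightarrow> ('a \<times> 'b) set \<Rightarrow> bool"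
  where "extension_graph G H S g0 P R \<longleftrightarrow> subgroup R (G \<times>\<times> H) \<and> single_valued R \<and>
     (\<lambda>s. (s, g0 s)) ` S \<subseteq> R \<and> (\<forall>(x, y)\<in>R. P x y)"

lemma extension_graph_base:
  assumes "group G" "group H" "subgroup S G" "g0 \<in> hom (G\<lparr>carrier := S\<rparr>) H"
    and "\<And>s. s \<in> S \<Longrightarrow> P s (g0 s)"
  shows "extension_graph G H S g0 P ((\<lambda>s. (s, g0 s)) ` S)"
proof -
  interpret S: group "G\<lparr>carrier := S\<rparr>"
    using subgroup.subgroup_is_group[OF assms(3,1)] .
  interpret g0: group_hom "G\<lparr>carrier := S\<rparr>" H g0
    using assms(2,4) by (simp add: group_hom_def group_hom_axioms_def S.group_axioms)
  have "subgroup ((\<lambda>s. (s, g0 s)) ` S) (G \<times>\<times> H)"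
  proof (rule group.subgroupI[OF DirProd_group[OF assms(1,2)]])
    show "(\<lambda>s. (s, g0 s)) ` S \<subseteq> carrier (G \<times>\<times> H)"
      using subgroup.subset[OF assms(3)] hom_in_carrier[OF assms(4)] by auto
    fix x y assume "x \<in> (\<lambda>s. (s, g0 s)) ` S" "y \<in> (\<lambda>s. (s, g0 s)) ` S"
    then obtain s t where st: "s \<in> S" "t \<in> S" "x = (s, g0 s)" "y = (t, g0 t)"
      by blast
    have "inv\<^bsub>G \<times>\<times> H\<^esub> x = (inv\<^bsub>G\<^esub> s, g0 (inv\<^bsub>G\<^esub> s))"
      using st g0.hom_inv[of s] subgroup.subset[OF assms(3)] hom_in_carrier[OF assms(4)]
      by (auto simp: inv_DirProd assms(1,2) group.m_inv_consistent[OF assms(1,3)])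
    then show "inv\<^bsub>G \<times>\<times> H\<^esub> x \<in> (\<lambda>s. (s, g0 s)) ` S"
      using st subgroup.m_inv_closed[OF assms(3)] by auto
    show "x \<otimes>\<^bsub>G \<times>\<times> H\<^esub> y \<in> (\<lambda>s. (s, g0 s)) ` S"
      using st g0.hom_mult[of s t] subgroup.m_closed[OF assms(3)] by auto
  qed (use assms(3) subgroup.one_closed in blast)
  then show ?thesis
    using assms(5) by (auto simp: extension_graph_def single_valued_def)
qed

lemma extension_graph_Union_chain:
  assumes "group G" "group H" "\<C> \<noteq> {}" "subset.chain \<A> \<C>"
    and "\<And>R. R \<in> \<C> \<Longrightarrow> extension_graph G H S g0 P R"
  shows "extension_graph G H S g0 P (\<Union>\<C>)"
proof -
  have "subgroup (\<Union>\<C>) (G \<times>\<times> H)"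
    using assms by (intro subgroup_Union_chain[OF DirProd_group]) (auto simp: extension_graph_def)
  moreover have "single_valued (\<Union>\<C>)"
  proof (rule single_valuedI)
    fix x y z assume "(x, y) \<in> \<Union>\<C>" "(x, z) \<in> \<Union>\<C>"
    then obtain R where "R \<in> \<C>" "{(x, y), (x, z)} \<subseteq> R"
      using finite_subset_Union_chain[of "{(x, y), (x, z)}" \<C> \<A>] assms(3,4) by auto
    then show "y = z"
      using assms(5)[of R] by (auto simp: extension_graph_def intro: single_valuedD)
  qed
  moreover obtain R where "R \<in> \<C>"
    using assms(3) by blast
  ultimately show ?thesis
    using assms(5) unfolding extension_graph_def by blast
qed

lemma l_coset_DirProd_iff:
  "p \<in> (b, b') <#\<^bsub>G \<times>\<times> H\<^esub> R \<longleftrightarrow> (\<exists>(x, y)\<in>R. p = (b \<otimes>\<^bsub>G\<^esub> x, b' \<otimes>\<^bsub>H\<^esub> y))"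
  by (force simp: l_coset_def)

lemma single_valued_adjoin:
  assumes G: "group G" and H: "group H" and R: "subgroup R (G \<times>\<times> H)" "single_valued R"
    and b: "b \<in> carrier G" "b \<notin> Domain R" and b': "b' \<in> carrier H"
  shows "single_valued (R \<union> ((b, b') <#\<^bsub>G \<times>\<times> H\<^esub> R))"
proof -
  interpret G: group G by (fact G)
  interpret H: group H by (fact H)
  have R_carrier: "(x, y) \<in> R \<Longrightarrow> x \<in> carrier G \<and> y \<in> carrier H" for x y
    using subgroup.subset[OF R(1)] by auto
  have not_in_coset: "x \<noteq> b \<otimes>\<^bsub>G\<^esub> x'" if "(x, y) \<in> R" "(x', y') \<in> R" for x y x' y'
  proof
    assume "x = b \<otimes>\<^bsub>G\<^esub> x'"
    then have "b = x \<otimes>\<^bsub>G\<^esub> inv\<^bsub>G\<^esub> x'"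
      using that R_carrier b(1) by (simp add: G.inv_solve_right)
    moreover have "(x, y) \<otimes>\<^bsub>G \<times>\<times> H\<^esub> inv\<^bsub>G \<times>\<times> H\<^esub> (x', y') \<in> R"
      using that subgroup.m_closed[OF R(1)] subgroup.m_inv_closed[OF R(1)] by blast
    ultimately show False
      using b(2) that R_carrier by (auto simp: inv_DirProd G.is_group H.is_group)
  qed
  show ?thesis
  proof (rule single_valuedI)
    fix x y z assume "(x, y) \<in> R \<union> ((b, b') <#\<^bsub>G \<times>\<times> H\<^esub> R)" "(x, z) \<in> R \<union> ((b, b') <#\<^bsub>G \<times>\<times> H\<^esub> R)"
    then show "y = z"
      using not_in_coset R_carrier b(1) b' R(2)
      by (auto simp: l_coset_DirProd_iff dest: single_valuedD)
  qed
qed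

lemma extension_graph_adjoin:
  assumes G: "comm_group G" and H: "comm_group H" and R: "extension_graph G H S g0 P R"
    and P_mult: "\<And>x y x' y'. x \<in> carrier G \<Longrightarrow> x' \<in> carrier G \<Longrightarrow> y \<in> carrier H \<Longrightarrow>
      y' \<in> carrier H \<Longrightarrow> P x y \<Longrightarrow> P x' y' \<Longrightarrow> P (x \<otimes>\<^bsub>G\<^esub> x') (y \<otimes>\<^bsub>H\<^esub> y')"
    and b: "b \<in> carrier G" "b \<notin> Domain R" "b \<otimes>\<^bsub>G\<^esub> b \<in> S"
    and b': "b' \<in> carrier H" "P b b'" "b' \<otimes>\<^bsub>H\<^esub> b' = g0 (b \<otimes>\<^bsub>G\<^esub> b)"
  shows "extension_graph G H S g0 P (R \<union> ((b, b') <#\<^bsub>G \<times>\<times> H\<^esub> R))"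
proof -
  interpret GH: comm_group "G \<times>\<times> H"
    using comm_group_DirProd[OF G H] .
  have sub: "subgroup R (G \<times>\<times> H)" and sv: "single_valued R"
    and g0R: "(\<lambda>s. (s, g0 s)) ` S \<subseteq> R" and PR: "\<And>x y. (x, y) \<in> R \<Longrightarrow> P x y"
    using R by (auto simp: extension_graph_def)
  have "subgroup (R \<union> ((b, b') <#\<^bsub>G \<times>\<times> H\<^esub> R)) (G \<times>\<times> H)"
    using g0R b b' by (intro GH.subgroup_adjoin_square_root[OF sub]) auto
  moreover have "single_valued (R \<union> ((b, b') <#\<^bsub>G \<times>\<times> H\<^esub> R))"
    using single_valued_adjoin[OF comm_group.axioms(2)[OF G] comm_group.axioms(2)[OF H]
        sub sv b(1,2) b'(1)] .
  moreover have "P x y" if "(x, y) \<in> R \<union> ((b, b') <#\<^bsub>G \<times>\<times> H\<^esub> R)" for x y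
    using that PR P_mult b b' subgroup.subset[OF sub] by (auto simp: l_coset_DirProd_iff)
  ultimately show ?thesis
    using g0R by (auto simp: extension_graph_def)
qed

lemma exists_maximal_extension_graph:
  assumes groups: "group G" "group H" and S: "subgroup S G" and g0: "g0 \<in> hom (G\<lparr>carrier := S\<rparr>) H"
    and P_g0: "\<And>s. s \<in> S \<Longrightarrow> P s (g0 s)"
  obtains M where "extension_graph G H S g0 P M"
    and "\<And>R. extension_graph G H S g0 P R \<Longrightarrow> M \<subseteq> R \<Longrightarrow> R = M"
proof -
  have "\<exists>M\<in>{R. extension_graph G H S g0 P R}. \<forall>R\<in>{R. extension_graph G H S g0 P R}. M \<subseteq> R \<longrightarrow> R = M"
  proof (rule subset_Zorn_nonempty)
    show "{R. extension_graph G H S g0 P R} \<noteq> {}"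
      using extension_graph_base[OF groups S g0, of P] P_g0 by blast
    show "\<Union>\<C> \<in> {R. extension_graph G H S g0 P R}"
      if "\<C> \<noteq> {}" "subset.chain {R. extension_graph G H S g0 P R} \<C>" for \<C>
      using extension_graph_Union_chain[OF groups that] that(2) by (auto simp: subset.chain_def)
  qed
  then show thesis
    using that by blast
qed

lemma hom_of_total_extension_graph:
  assumes M: "extension_graph G H S g0 P M" and total: "\<And>x. x \<in> carrier G \<Longrightarrow> x \<in> Domain M"
  obtains g where "g \<in> hom G H" "\<And>s. s \<in> S \<Longrightarrow> g s = g0 s" "\<And>x. x \<in> carrier G \<Longrightarrow> P x (g x)"
proof -
  have M_sub: "subgroup M (G \<times>\<times> H)" and M_sv: "single_valued M"
    and M_g0: "\<And>s. s \<in> S \<Longrightarrow> (s, g0 s) \<in> M" and M_P: "\<And>x y. (x, y) \<in> M \<Longrightarrow> P x y"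
    using M by (auto simp: extension_graph_def)
  define g where "g x = (THE y. (x, y) \<in> M)" for x
  have g_M: "(x, y) \<in> M \<Longrightarrow> g x = y" for x y
    unfolding g_def using M_sv by (blast intro: single_valuedD)
  have g_M': "x \<in> carrier G \<Longrightarrow> (x, g x) \<in> M" for x
    using total g_M by blast
  have "g \<in> hom G H"
  proof (rule homI)
    fix x y assume "x \<in> carrier G" "y \<in> carrier G"
    then show "g (x \<otimes>\<^bsub>G\<^esub> y) = g x \<otimes>\<^bsub>H\<^esub> g y"
      using subgroup.m_closed[OF M_sub g_M' g_M'] g_M by simp
  next
    fix x assume "x \<in> carrier G"
    then show "g x \<in> carrier H"
      using g_M' subgroup.subset[OF M_sub] by auto
  qed
  then show thesis
    using that M_g0 g_M g_M' M_P by blast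
qed

lemma hom_extension_from_squares:
  fixes G :: "'a monoid" and H :: "'b monoid"
  assumes G: "comm_group G" and H: "comm_group H"
    and S: "subgroup S G" and g0: "g0 \<in> hom (G\<lparr>carrier := S\<rparr>) H"
    and squares: "\<And>x. x \<in> carrier G \<Longrightarrow> x \<otimes>\<^bsub>G\<^esub> x \<in> S"
    and P_g0: "\<And>s. s \<in> S \<Longrightarrow> P s (g0 s)"
    and P_mult: "\<And>x y x' y'. x \<in> carrier G \<Longrightarrow> x' \<in> carrier G \<Longrightarrow> y \<in> carrier H \<Longrightarrow>
      y' \<in> carrier H \<Longrightarrow> P x y \<Longrightarrow> P x' y' \<Longrightarrow> P (x \<otimes>\<^bsub>G\<^esub> x') (y \<otimes>\<^bsub>H\<^esub> y')"
    and square_root: "\<And>x. x \<in> carrier G \<Longrightarrow>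
      \<exists>y\<in>carrier H. P x y \<and> y \<otimes>\<^bsub>H\<^esub> y = g0 (x \<otimes>\<^bsub>G\<^esub> x)"
  obtains g where "g \<in> hom G H" "\<And>s. s \<in> S \<Longrightarrow> g s = g0 s" "\<And>x. x \<in> carrier G \<Longrightarrow> P x (g x)"
proof -
  have groups: "group G" "group H"
    using G H comm_group.axioms(2) by blast+
  obtain M where M: "extension_graph G H S g0 P M"
    and M_max: "\<And>R. extension_graph G H S g0 P R \<Longrightarrow> M \<subseteq> R \<Longrightarrow> R = M"
    using exists_maximal_extension_graph[OF groups S g0, of P] P_g0 by blast
  have "x \<in> Domain M" if x: "x \<in> carrier G" for x
  proof (rule ccontr)
    assume x_notin: "x \<notin> Domain M"
    obtain y where y: "y \<in> carrier H" "P x y" "y \<otimes>\<^bsub>H\<^esub> y = g0 (x \<otimes>\<^bsub>G\<^esub> x)"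
      using square_root[OF x] by blast
    have "M \<union> ((x, y) <#\<^bsub>G \<times>\<times> H\<^esub> M) = M"
      using extension_graph_adjoin[OF G H M P_mult x x_notin squares[OF x] y] M_max by blast
    moreover have "(x, y) \<in> (x, y) <#\<^bsub>G \<times>\<times> H\<^esub> M"
      using M subgroup.one_closed x y(1) groups
      by (auto simp: extension_graph_def l_coset_def group.is_monoid intro!: bexI[of _ "\<one>\<^bsub>G \<times>\<times> H\<^esub>"])
    ultimately show False
      using x_notin by blast
  qed
  then show thesis
    using hom_of_total_extension_graph[OF M] that by blast
qed

context exact_eta_diagram_pair
begin

lemma chi_hom_respects_chi:
  assumes h: "h \<in> hom (grpC N) (grpC N')"
    and cd: "c \<in> carrier (grpC N)" "d \<in> carrier (grpC N)" "chi N c = chi N d"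
  shows "chi N' (h c) = chi N' (h d)"
proof -
  have "c \<otimes>\<^bsub>grpC N\<^esub> inv\<^bsub>grpC N\<^esub> d \<in> twice (grpC N)"
    using cd N.chi_eq_iff_mod2_class_eq N.C.mod2_class_eq_iff by simp
  then have "h (c \<otimes>\<^bsub>grpC N\<^esub> inv\<^bsub>grpC N\<^esub> d) \<in> twice (grpC N')"
    by (rule hom_twice[OF h])
  then have "h c \<otimes>\<^bsub>grpC N'\<^esub> inv\<^bsub>grpC N'\<^esub> h d \<in> twice (grpC N')"
    using cd by (simp add: hom_mult[OF h] hom_inv_group[OF h N.C.is_group N'.C.is_group])
  then show ?thesis
    using cd hom_in_carrier[OF h] N'.chi_eq_iff_mod2_class_eq N'.C.mod2_class_eq_iff by simp
qed

lemma hom_on_image_chi: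
  assumes h: "h \<in> hom (grpC N) (grpC N')"
  obtains g0 where "g0 \<in> hom ((grpB N)\<lparr>carrier := chi N ` carrier (grpC N)\<rparr>) (grpB N')"
    and "\<And>c. c \<in> carrier (grpC N) \<Longrightarrow> g0 (chi N c) = chi N' (h c)"
proof -
  define g0 where "g0 b = chi N' (h (SOME c. c \<in> carrier (grpC N) \<and> chi N c = b))" for b
  have g0_chi: "g0 (chi N c) = chi N' (h c)" if "c \<in> carrier (grpC N)" for c
  proof -
    have "\<exists>d. d \<in> carrier (grpC N) \<and> chi N d = chi N c"
      using that by blast
    then show ?thesis
      unfolding g0_def using chi_hom_respects_chi[OF h _ that]
        by (metis (mono_tags, lifting) someI_ex)
  qed
  have "g0 \<in> hom ((grpB N)\<lparr>carrier := chi N ` carrier (grpC N)\<rparr>) (grpB N')"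
  proof (rule homI)
    fix x y assume "x \<in> carrier ((grpB N)\<lparr>carrier := chi N ` carrier (grpC N)\<rparr>)"
      "y \<in> carrier ((grpB N)\<lparr>carrier := chi N ` carrier (grpC N)\<rparr>)"
    then obtain c d where cd: "c \<in> carrier (grpC N)" "d \<in> carrier (grpC N)"
      "x = chi N c" "y = chi N d"
      by auto
    then have "g0 (x \<otimes>\<^bsub>grpB N\<^esub> y) = chi N' (h (c \<otimes>\<^bsub>grpC N\<^esub> d))"
      using g0_chi[of "c \<otimes>\<^bsub>grpC N\<^esub> d"] by (simp add: N.chi_mult)
    also have "\<dots> = g0 x \<otimes>\<^bsub>grpB N'\<^esub> g0 y"
      using cd by (simp add: g0_chi hom_mult[OF h] hom_in_carrier[OF h] N'.chi_mult)
    finally show "g0 (x \<otimes>\<^bsub>(grpB N)\<lparr>carrier := chi N ` carrier (grpC N)\<rparr>\<^esub> y) = g0 x \<otimes>\<^bsub>grpB N'\<^esub> g0 y"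
      by simp
  qed (auto simp: g0_chi hom_in_carrier[OF h])
  with g0_chi show thesis
    using that by blast
qed

lemma ed_hom_lifts:
  assumes fh: "(f, h) \<in> ed_hom (pi_obj N) (pi_obj N')"
  shows "\<exists>g. (f, g, h) \<in> eeed_hom N N'"
proof -
  have f: "f \<in> hom (grpA N) (grpA N')" and h: "h \<in> hom (grpC N) (grpC N')"
    and h_eta: "\<And>a. a \<in> carrier (grpA N) \<Longrightarrow> h (eta N a) = eta N' (f a)"
    using fh by (auto simp: ed_hom_def ghom_def)
  have f_one: "f \<one>\<^bsub>grpA N\<^esub> = \<one>\<^bsub>grpA N'\<^esub>"
    using f by (simp add: hom_one_group N.A.is_group N'.A.is_group)
  obtain g0 where g0: "g0 \<in> hom ((grpB N)\<lparr>carrier := chi N ` carrier (grpC N)\<rparr>) (grpB N')"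
    and g0_chi: "\<And>c. c \<in> carrier (grpC N) \<Longrightarrow> g0 (chi N c) = chi N' (h c)"
    using hom_on_image_chi[OF h] by blast
  interpret chi: group_hom "grpC N" "grpB N" "chi N"
    by (simp add: group_hom_def group_hom_axioms_def N.C.is_group N.B.is_group N.chi_hom)
  have S: "subgroup (chi N ` carrier (grpC N)) (grpB N)"
    using chi.subgroup_img_is_subgroup[OF N.C.subgroup_self] .
  obtain g where g: "g \<in> hom (grpB N) (grpB N')"
    and g_chi: "\<And>c. c \<in> carrier (grpC N) \<Longrightarrow> g (chi N c) = g0 (chi N c)"
    and g_psi: "\<And>b. b \<in> carrier (grpB N) \<Longrightarrow> psi N' (g b) = f (psi N b)"
  proof (rule hom_extension_from_squares[OF N.B.comm_group_axioms N'.B.comm_group_axioms S g0,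
        where P = "\<lambda>b b'. psi N' b' = f (psi N b)"])
    show "b \<otimes>\<^bsub>grpB N\<^esub> b \<in> chi N ` carrier (grpC N)" if "b \<in> carrier (grpB N)" for b
      using that N.chi_eta_psi[of b] by (metis N.eta_closed N.psi_closed image_eqI)
    show "psi N' (g0 s) = f (psi N s)" if "s \<in> chi N ` carrier (grpC N)" for s
      using that by (auto simp: g0_chi hom_in_carrier[OF h] N'.psi_chi N.psi_chi f_one)
    show "psi N' (y \<otimes>\<^bsub>grpB N'\<^esub> y') = f (psi N (x \<otimes>\<^bsub>grpB N\<^esub> x'))"
      if "x \<in> carrier (grpB N)" "x' \<in> carrier (grpB N)"
        "y \<in> carrier (grpB N')" "y' \<in> carrier (grpB N')"
        "psi N' y = f (psi N x)" "psi N' y' = f (psi N x')" for x y x' y'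
      using that by (simp add: N'.psi_mult N.psi_mult hom_mult[OF f])
    show "\<exists>b'\<in>carrier (grpB N'). psi N' b' = f (psi N b) \<and> b' \<otimes>\<^bsub>grpB N'\<^esub> b' = g0 (b \<otimes>\<^bsub>grpB N\<^esub> b)"
      if b: "b \<in> carrier (grpB N)" for b
    proof -
      have "f (psi N b) \<otimes>\<^bsub>grpA N'\<^esub> f (psi N b) = \<one>\<^bsub>grpA N'\<^esub>"
        using N.psi_two_torsion[OF b] b f_one by (simp add: two_torsion_def flip: hom_mult[OF f])
      then have "f (psi N b) \<in> two_torsion (grpA N')"
        using b hom_in_carrier[OF f] by (simp add: two_torsion_def)
      then obtain b' where b': "b' \<in> carrier (grpB N')" "psi N' b' = f (psi N b)"
        using N'.psi_onto by blast
      have "b' \<otimes>\<^bsub>grpB N'\<^esub> b' = chi N' (h (eta N (psi N b)))"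
        using N'.chi_eta_psi[OF b'(1)] b'(2) b h_eta by simp
      also have "\<dots> = g0 (b \<otimes>\<^bsub>grpB N\<^esub> b)"
        using g0_chi b by (simp flip: N.chi_eta_psi)
      finally show ?thesis
        using b' by blast
    qed
  qed blast
  let ?g = "restrict g (carrier (grpB N))"
  have "?g \<in> ghom (grpB N) (grpB N')"
    using g by (auto simp: ghom_def hom_def)
  then show ?thesis
    using fh g_chi g_psi g0_chi
      by (intro exI[of _ ?g]) (auto simp: eeed_hom_def ed_hom_def ghom_def)
qed

lemma image_pi_mor: "pi_mor ` eeed_hom N N' = ed_hom (pi_obj N) (pi_obj N')"
proof
  show "pi_mor ` eeed_hom N N' \<subseteq> ed_hom (pi_obj N) (pi_obj N')"
    using pi_mor_eeed_hom by blast
  show "ed_hom (pi_obj N) (pi_obj N') \<subseteq> pi_mor ` eeed_hom N N'"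
  proof
    fix m assume m: "m \<in> ed_hom (pi_obj N) (pi_obj N')"
    obtain f h where "m = (f, h)"
      by (cases m)
    then show "m \<in> pi_mor ` eeed_hom N N'"
      using ed_hom_lifts m by (force simp: pi_mor_def)
  qed
qed


lemma induced_chi_mod2_map:
  assumes "(f, g, h) \<in> eeed_hom N N'" "X \<in> carrier (mod2 (grpC N))"
  shows "induced_chi N' (mod2_map (grpC N) (grpC N') h X) = g (induced_chi N X)"
proof -
  have "mod2_rep X \<in> carrier (grpC N)"
    using assms(2) by (rule N.C.mod2_rep_closed)
  moreover have "mod2_map (grpC N) (grpC N') h X = twice (grpC N') #>\<^bsub>grpC N'\<^esub> h (mod2_rep X)"
    using assms(2) by (simp add: mod2_map_def mod2_rep_def)
  ultimately show ?thesis
    using eeed_homD[OF assms(1)] by (simp add: hom_in_carrier induced_chi_def[of N X])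
qed

end

lemma xi_natural:
  assumes "exact_eta_diagram M" "exact_eta_diagram N" "exact_eta_diagram N'" "exact_eta_diagram N''"
    and m1: "(f1, g1, h1) \<in> eeed_hom M N" and m2: "(f2, g2, h2) \<in> eeed_hom N' N''"
    and u: "u \<in> ghom (tors2 (grpA N)) (mod2 (grpC N'))"
  shows "xi M N'' (\<lambda>a\<in>two_torsion (grpA M). mod2_map (grpC N') (grpC N'') h2 (u (f1 a)))
         = eeed_comp M (f2, g2, h2) (eeed_comp M (xi N N' u) (f1, g1, h1))"
proof -
  interpret M: exact_eta_diagram M by fact
  interpret NN: exact_eta_diagram_pair N N' using assms(2,3)
    by (simp add: exact_eta_diagram_pair_def)
  interpret N'N'': exact_eta_diagram_pair N' N'' using assms(3,4)
    by (simp add: exact_eta_diagram_pair_def)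
  note D1 = eeed_homD[OF m1] and D2 = eeed_homD[OF m2]
  have f1_psi: "b \<in> carrier (grpB M) \<Longrightarrow> f1 (psi M b) \<in> two_torsion (grpA N)" for b
    using D1(7) hom_in_carrier[OF D1(3)] NN.N.psi_two_torsion by simp
  have "compose (carrier (grpA M)) f2 (compose (carrier (grpA M)) (hom_zero (grpA N) (grpA N')) f1)
      = hom_zero (grpA M) (grpA N'')"
    using hom_in_carrier[OF D1(1)] hom_one_group[OF D2(1) NN.N'.A.is_group N'N''.N'.A.is_group]
    by (auto simp: compose_def hom_zero_def intro!: restrict_ext)
  moreover have
    "compose (carrier (grpC M)) h2 (compose (carrier (grpC M)) (hom_zero (grpC N) (grpC N')) h1)
      = hom_zero (grpC M) (grpC N'')"
    using hom_in_carrier[OF D1(5)] hom_one_group[OF D2(5) NN.N'.C.is_group N'N''.N'.C.is_group]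
    by (auto simp: compose_def hom_zero_def intro!: restrict_ext)
  moreover have "(\<lambda>b\<in>carrier (grpB M). induced_chi N''
        ((\<lambda>a\<in>two_torsion (grpA M). mod2_map (grpC N') (grpC N'') h2 (u (f1 a))) (psi M b)))
    = compose (carrier (grpB M)) g2
        (compose (carrier (grpB M)) (\<lambda>b\<in>carrier (grpB N). induced_chi N' (u (psi N b))) g1)"
    using f1_psi D1(7) hom_in_carrier[OF D1(3)] N'N''.induced_chi_mod2_map[OF m2]
      NN.torsion_hom_closed[OF u]
    by (auto simp: compose_def M.psi_two_torsion intro!: restrict_ext)
  ultimately show ?thesis
    by (simp add: xi_eq eeed_comp_def)
qed

definition symmetric_cocycle :: "'a monoid \<Rightarrow> 'w monoid \<Rightarrow> ('a \<Rightarrow> 'a \<Rightarrow> 'w) \<Rightarrow> bool" where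
  "symmetric_cocycle V W c \<longleftrightarrow>
     (\<forall>a\<in>carrier V. \<forall>b\<in>carrier V. c a b \<in> carrier W \<and> c a b = c b a) \<and>
     (\<forall>b\<in>carrier V. c \<one>\<^bsub>V\<^esub> b = \<one>\<^bsub>W\<^esub>) \<and>
     (\<forall>a\<in>carrier V. \<forall>b\<in>carrier V. \<forall>d\<in>carrier V.
        c a b \<otimes>\<^bsub>W\<^esub> c (a \<otimes>\<^bsub>V\<^esub> b) d = c b d \<otimes>\<^bsub>W\<^esub> c a (b \<otimes>\<^bsub>V\<^esub> d))"

definition twisted_product :: "'a monoid \<Rightarrow> 'w monoid \<Rightarrow> ('a \<Rightarrow> 'a \<Rightarrow> 'w) \<Rightarrow> ('a \<times> 'w) monoid" where
  "twisted_product V W c = \<lparr>carrier = carrier V \<times> carrier W,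
     mult = (\<lambda>p q. (fst p \<otimes>\<^bsub>V\<^esub> fst q, snd p \<otimes>\<^bsub>W\<^esub> snd q \<otimes>\<^bsub>W\<^esub> c (fst p) (fst q))),
     one = (\<one>\<^bsub>V\<^esub>, \<one>\<^bsub>W\<^esub>)\<rparr>"

lemma twisted_product_simps [simp]:
  "carrier (twisted_product V W c) = carrier V \<times> carrier W"
  "(a, x) \<otimes>\<^bsub>twisted_product V W c\<^esub> (b, y) = (a \<otimes>\<^bsub>V\<^esub> b, x \<otimes>\<^bsub>W\<^esub> y \<otimes>\<^bsub>W\<^esub> c a b)"
  "\<one>\<^bsub>twisted_product V W c\<^esub> = (\<one>\<^bsub>V\<^esub>, \<one>\<^bsub>W\<^esub>)"
  by (simp_all add: twisted_product_def)

lemma comm_group_twisted_product: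
  assumes V: "comm_group V" and W: "comm_group W" and c: "symmetric_cocycle V W c"
  shows "comm_group (twisted_product V W c)"
proof -
  interpret V: comm_group V by (fact V)
  interpret W: comm_group W by (fact W)
  have c_closed: "\<And>a b. a \<in> carrier V \<Longrightarrow> b \<in> carrier V \<Longrightarrow> c a b \<in> carrier W"
    and c_sym: "\<And>a b. a \<in> carrier V \<Longrightarrow> b \<in> carrier V \<Longrightarrow> c a b = c b a"
    and c_one: "\<And>b. b \<in> carrier V \<Longrightarrow> c \<one>\<^bsub>V\<^esub> b = \<one>\<^bsub>W\<^esub>"
    and cocycle: "\<And>a b d. a \<in> carrier V \<Longrightarrow> b \<in> carrier V \<Longrightarrow> d \<in> carrier V \<Longrightarrow>
      c a b \<otimes>\<^bsub>W\<^esub> c (a \<otimes>\<^bsub>V\<^esub> b) d = c b d \<otimes>\<^bsub>W\<^esub> c a (b \<otimes>\<^bsub>V\<^esub> d)"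
    using c by (auto simp: symmetric_cocycle_def)
  have "group (twisted_product V W c)"
  proof (rule groupI)
    fix p q r assume "p \<in> carrier (twisted_product V W c)" "q \<in> carrier (twisted_product V W c)"
      "r \<in> carrier (twisted_product V W c)"
    then obtain a x b y d z where pqr: "p = (a, x)" "q = (b, y)" "r = (d, z)"
      and in_V: "a \<in> carrier V" "b \<in> carrier V" "d \<in> carrier V"
      and in_W: "x \<in> carrier W" "y \<in> carrier W" "z \<in> carrier W"
      by auto
    have "x \<otimes>\<^bsub>W\<^esub> y \<otimes>\<^bsub>W\<^esub> c a b \<otimes>\<^bsub>W\<^esub> z \<otimes>\<^bsub>W\<^esub> c (a \<otimes>\<^bsub>V\<^esub> b) d
        = x \<otimes>\<^bsub>W\<^esub> y \<otimes>\<^bsub>W\<^esub> z \<otimes>\<^bsub>W\<^esub> (c a b \<otimes>\<^bsub>W\<^esub> c (a \<otimes>\<^bsub>V\<^esub> b) d)"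
      using in_V in_W c_closed by (simp add: W.m_ac)
    also have "\<dots> = x \<otimes>\<^bsub>W\<^esub> (y \<otimes>\<^bsub>W\<^esub> z \<otimes>\<^bsub>W\<^esub> c b d) \<otimes>\<^bsub>W\<^esub> c a (b \<otimes>\<^bsub>V\<^esub> d)"
      using in_V in_W c_closed by (simp add: cocycle W.m_ac)
    finally show "p \<otimes>\<^bsub>twisted_product V W c\<^esub> q \<otimes>\<^bsub>twisted_product V W c\<^esub> r =
        p \<otimes>\<^bsub>twisted_product V W c\<^esub> (q \<otimes>\<^bsub>twisted_product V W c\<^esub> r)"
      using pqr in_V by (simp add: V.m_assoc)
  next
    fix p assume "p \<in> carrier (twisted_product V W c)"
    then obtain a x where p: "p = (a, x)" "a \<in> carrier V" "x \<in> carrier W"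
      by auto
    show "\<one>\<^bsub>twisted_product V W c\<^esub> \<otimes>\<^bsub>twisted_product V W c\<^esub> p = p"
      using p by (simp add: c_one)
    let ?q = "(inv\<^bsub>V\<^esub> a, inv\<^bsub>W\<^esub> x \<otimes>\<^bsub>W\<^esub> inv\<^bsub>W\<^esub> c a (inv\<^bsub>V\<^esub> a))"
    have "?q \<otimes>\<^bsub>twisted_product V W c\<^esub> p = \<one>\<^bsub>twisted_product V W c\<^esub>"
      using p c_closed c_sym[of a "inv\<^bsub>V\<^esub> a"] by (simp add: W.m_ac)
    moreover have "?q \<in> carrier (twisted_product V W c)"
      using p c_closed by simp
    ultimately show "\<exists>q\<in>carrier (twisted_product V W c).
        q \<otimes>\<^bsub>twisted_product V W c\<^esub> p = \<one>\<^bsub>twisted_product V W c\<^esub>"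
      by blast
  qed (auto simp: c_closed)
  then show ?thesis
    by (rule group.group_comm_groupI) (auto simp: c_sym V.m_comm W.m_comm)
qed

definition image_group :: "'b monoid \<Rightarrow> ('b \<Rightarrow> 'd) \<Rightarrow> 'd monoid" where
  "image_group G j = \<lparr>carrier = j ` carrier G,
     mult = (\<lambda>x y. j (inv_into (carrier G) j x \<otimes>\<^bsub>G\<^esub> inv_into (carrier G) j y)), one = j \<one>\<^bsub>G\<^esub>\<rparr>"

lemma image_group_simps [simp]:
  "carrier (image_group G j) = j ` carrier G"
  "one (image_group G j) = j \<one>\<^bsub>G\<^esub>"
  by (simp_all add: image_group_def)

lemma hom_image_group:
  assumes "monoid G" "inj_on j (carrier G)"
  shows "j \<in> hom G (image_group G j)"
  using assms by (intro homI) (simp_all add: image_group_def monoid.m_closed)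

lemma comm_group_image_group:
  assumes "comm_group G" "inj_on j (carrier G)"
  shows "comm_group (image_group G j)"
proof -
  have img: "(image_group G j)\<lparr>carrier := j ` carrier G, one := j \<one>\<^bsub>G\<^esub>\<rparr> = image_group G j"
    by (simp add: image_group_def)
  have "monoid G"
    using assms(1) by (simp add: comm_group_def comm_monoid_def)
  from comm_group.hom_imp_img_comm_group[OF assms(1) hom_image_group[OF this assms(2)]]
  show ?thesis
    unfolding img .
qed

definition transport_B :: "('a, 'b, 'c) eeed \<Rightarrow> ('b \<Rightarrow> 'd) \<Rightarrow> ('a, 'd, 'c) eeed" where
  "transport_B N j = \<lparr>grpA = grpA N, grpB = image_group (grpB N) j, grpC = grpC N, eta = eta N,
     chi = (\<lambda>c. j (chi N c)), psi = (\<lambda>b. psi N (inv_into (carrier (grpB N)) j b))\<rparr>"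

lemma pi_obj_transport_B: "pi_obj (transport_B N j) = pi_obj N"
  by (simp add: pi_obj_def transport_B_def)

lemma is_eeed_transport_B:
  assumes "is_eeed N" and inj: "inj_on j (carrier (grpB N))"
  shows "is_eeed (transport_B N j)"
proof -
  interpret exact_eta_diagram N
    using assms(1) by (rule exact_eta_diagram.intro)
  let ?k = "inv_into (carrier (grpB N)) j"
  have j_hom: "j \<in> hom (grpB N) (image_group (grpB N) j)"
    using hom_image_group[OF B.is_monoid inj] .
  have kj: "x \<in> carrier (grpB N) \<Longrightarrow> ?k (j x) = x" for x
    using inj by (simp add: inv_into_f_f)
  have "(\<lambda>c. j (chi N c)) \<in> hom (grpC N) (image_group (grpB N) j)"
    using hom_compose[OF chi_hom j_hom] by (simp add: comp_def)
  moreover have "(\<lambda>b. psi N (?k b)) \<in> hom (image_group (grpB N) j) (grpA N)"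
    by (rule homI) (auto simp: image_group_def kj psi_mult inv_into_into)
  ultimately have "is_eed (transport_B N j)"
    using comm_group_image_group[OF B.comm_group_axioms inj] A.comm_group_axioms C.comm_group_axioms
      eta_hom eta_square
    by (auto simp: is_eed_def transport_B_def kj psi_chi chi_eta_psi image_group_def)
  moreover have "eed_exact (transport_B N j)"
    unfolding eed_exact_def transport_B_def
  proof (simp, intro conjI ballI impI)
    fix a assume "a \<in> two_torsion (grpA N)"
    then show "\<exists>b\<in>carrier (grpB N). psi N (?k (j b)) = a"
      using psi_onto kj by auto
  next
    fix b assume "b \<in> carrier (grpB N)" "psi N (?k (j b)) = \<one>\<^bsub>grpA N\<^esub>"
    then show "\<exists>c\<in>carrier (grpC N). j (chi N c) = j b"
      using ker_psi kj by force
  next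
    fix c assume "c \<in> carrier (grpC N)" "j (chi N c) = j \<one>\<^bsub>grpB N\<^esub>"
    then show "c \<in> twice (grpC N)"
      using inj ker_chi by (auto dest: inj_onD)
  qed
  ultimately show ?thesis
    by (simp add: is_eeed_def)
qed

lemma ed_iso_ed_id:
  assumes "is_ed E"
  shows "ed_iso E E (ed_id E)"
proof -
  have "(\<lambda>x\<in>carrier (edA E). x) \<in> hom (edA E) (edA E)"
    "(\<lambda>x\<in>carrier (edC E). x) \<in> hom (edC E) (edC E)"
    using assms by (auto intro!: homI simp: is_ed_def comm_group_def group_def monoid.m_closed)
  then have "ed_id E \<in> ed_hom E E"
    using assms by (auto simp: ed_id_def ed_hom_def ghom_def is_ed_def hom_in_carrier)
  moreover have "ed_comp E (ed_id E) (ed_id E) = ed_id E"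
    by (auto simp: ed_comp_def ed_id_def compose_def intro!: restrict_ext)
  ultimately show ?thesis
    unfolding ed_iso_def by blast
qed

lemma poly_mapping_double_eq_iff: "x + x = y + y \<longleftrightarrow> x = (y :: 'a \<Rightarrow>\<^sub>0 int)"
proof
  assume xy: "x + x = y + y"
  have "poly_mapping.lookup x k = poly_mapping.lookup y k" for k
    using arg_cong[OF xy, of "\<lambda>z. poly_mapping.lookup z k"] by (simp add: Poly_Mapping.lookup_add)
  then show "x = y"
    by (rule poly_mapping_eqI)
qed simp

lemma free_presentation_with_halving:
  fixes V :: "'a monoid" and W :: "'w monoid"
  assumes V: "comm_group V" and W: "comm_group W" and q: "q \<in> hom V W"
    and V_square: "\<And>v. v \<in> carrier V \<Longrightarrow> v \<otimes>\<^bsub>V\<^esub> v = \<one>\<^bsub>V\<^esub>"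
  obtains p \<theta> where "p \<in> hom (free_Abelian_group (carrier V)) V"
    and "\<And>v. v \<in> carrier V \<Longrightarrow> p (frag_of v) = v"
    and "\<theta> \<in> hom ((free_Abelian_group (carrier V))
                   \<lparr>carrier := kernel (free_Abelian_group (carrier V)) V p\<rparr>) W"
    and "\<And>x. x \<in> carrier (free_Abelian_group (carrier V)) \<Longrightarrow> \<theta> (x + x) = q (p x)"
proof -
  interpret V: comm_group V by (fact V)
  interpret W: comm_group W by (fact W)
  let ?F = "free_Abelian_group (carrier V)"
  interpret F: comm_group_rec ?F
    by (simp add: comm_group_rec_def abelian_free_Abelian_group)
  obtain p where p: "p \<in> hom ?F V" and p_frag: "\<And>v. v \<in> carrier V \<Longrightarrow> p (frag_of v) = v"
    using V.free_Abelian_group_universal[of id "carrier V"] by auto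
  have p_add: "x \<in> carrier ?F \<Longrightarrow> y \<in> carrier ?F \<Longrightarrow> p (x + y) = p x \<otimes>\<^bsub>V\<^esub> p y" for x y
    using hom_mult[OF p] by simp
  define R where "R = kernel ?F V p"
  have R: "subgroup R ?F"
    unfolding R_def using p
      by (intro group_hom.subgroup_kernel) (simp add: group_hom_def group_hom_axioms_def)
  have twice_R: "twice ?F \<subseteq> R"
  proof
    fix z assume z: "z \<in> twice ?F"
    then obtain x where x: "x \<in> carrier ?F" "z = x + x"
      by (auto simp: twice_def)
    have "z \<in> carrier ?F"
      using z subgroup.subset[OF F.subgroup_twice] by blast
    moreover have "p z = \<one>\<^bsub>V\<^esub>"
      using x V_square hom_in_carrier[OF p] by (simp add: p_add)
    ultimately show "z \<in> R"
      unfolding R_def kernel_def by blast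
  qed
  define half where "half z = (SOME x. x \<in> carrier ?F \<and> z = x + x)" for z
  have half: "x \<in> carrier ?F \<Longrightarrow> half (x + x) = x" for x
    unfolding half_def by (rule some_equality) (auto simp: poly_mapping_double_eq_iff)
  define g0 where "g0 z = q (p (half z))" for z
  have g0: "g0 \<in> hom ((?F\<lparr>carrier := R\<rparr>)\<lparr>carrier := twice ?F\<rparr>) W"
  proof (rule homI)
    fix x y assume "x \<in> carrier ((?F\<lparr>carrier := R\<rparr>)\<lparr>carrier := twice ?F\<rparr>)"
      "y \<in> carrier ((?F\<lparr>carrier := R\<rparr>)\<lparr>carrier := twice ?F\<rparr>)"
    then obtain a b where ab: "a \<in> carrier ?F" "b \<in> carrier ?F" "x = a + a" "y = b + b"
      by (auto simp: twice_def)
    have ab_closed: "a + b \<in> carrier ?F"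
      using ab F.m_closed[of a b] by simp
    have "x \<otimes>\<^bsub>(?F\<lparr>carrier := R\<rparr>)\<lparr>carrier := twice ?F\<rparr>\<^esub> y = (a + b) + (a + b)"
      using ab by (simp add: algebra_simps)
    then have "half (x \<otimes>\<^bsub>(?F\<lparr>carrier := R\<rparr>)\<lparr>carrier := twice ?F\<rparr>\<^esub> y) = a + b"
      using half[OF ab_closed] by simp
    then show "g0 (x \<otimes>\<^bsub>(?F\<lparr>carrier := R\<rparr>)\<lparr>carrier := twice ?F\<rparr>\<^esub> y) = g0 x \<otimes>\<^bsub>W\<^esub> g0 y"
      unfolding g0_def using ab by (simp add: half p_add hom_mult[OF q] hom_in_carrier[OF p])
  qed (auto simp: twice_def g0_def half hom_in_carrier[OF p] hom_in_carrier[OF q])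
  obtain \<theta> where \<theta>: "\<theta> \<in> hom (?F\<lparr>carrier := R\<rparr>) W" and \<theta>_g0: "\<And>z. z \<in> twice ?F \<Longrightarrow> \<theta> z = g0 z"
  proof (rule hom_extension_from_squares[OF comm_group_subgroup[OF F.comm_group_axioms R] W _ g0,
        where P = "\<lambda>_ _. True"])
    show "subgroup (twice ?F) (?F\<lparr>carrier := R\<rparr>)"
      using F.subgroup_incl[OF F.subgroup_twice R twice_R] .
    show "\<exists>y\<in>carrier W. True \<and> y \<otimes>\<^bsub>W\<^esub> y = g0 (x \<otimes>\<^bsub>?F\<lparr>carrier := R\<rparr>\<^esub> x)"
      if "x \<in> carrier (?F\<lparr>carrier := R\<rparr>)" for x
      using that subgroup.subset[OF R] hom_one_group[OF q V.is_group W.is_group]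
      by (intro bexI[of _ "\<one>\<^bsub>W\<^esub>"]) (auto simp: g0_def half R_def kernel_def)
  qed (use F.square_in_twice subgroup.subset[OF R] in auto)
  show thesis
  proof (rule that[OF p p_frag])
    show "\<theta> \<in> hom (?F\<lparr>carrier := kernel ?F V p\<rparr>) W"
      using \<theta> by (simp add: R_def)
    show "\<theta> (x + x) = q (p x)" if "x \<in> carrier ?F" for x
      using that \<theta>_g0[of "x + x"] F.square_in_twice[of x] by (simp add: g0_def half)
  qed
qed

lemma symmetric_cocycle_with_diagonal:
  fixes V :: "'a monoid" and W :: "'w monoid"
  assumes V: "comm_group V" and W: "comm_group W" and q: "q \<in> hom V W"
    and V_square: "\<And>v. v \<in> carrier V \<Longrightarrow> v \<otimes>\<^bsub>V\<^esub> v = \<one>\<^bsub>V\<^esub>"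
  obtains c where "symmetric_cocycle V W c" and "\<And>v. v \<in> carrier V \<Longrightarrow> c v v = q v"
proof -
  interpret V: comm_group V by (fact V)
  interpret W: comm_group W by (fact W)
  let ?F = "free_Abelian_group (carrier V)"
  obtain p \<theta> where p: "p \<in> hom ?F V" and p_frag: "\<And>v. v \<in> carrier V \<Longrightarrow> p (frag_of v) = v"
    and \<theta>: "\<theta> \<in> hom (?F\<lparr>carrier := kernel ?F V p\<rparr>) W"
    and \<theta>_double: "\<And>x. x \<in> carrier ?F \<Longrightarrow> \<theta> (x + x) = q (p x)"
    using free_presentation_with_halving[OF V W q V_square] by blast
  let ?R = "kernel ?F V p"
  have F_closed: "x \<in> carrier ?F \<Longrightarrow> y \<in> carrier ?F \<Longrightarrow> x + y \<in> carrier ?F \<and> x - y \<in> carrier ?F" for x y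
    by (auto dest: subsetD[OF keys_add] subsetD[OF keys_diff])
  have p_add: "x \<in> carrier ?F \<Longrightarrow> y \<in> carrier ?F \<Longrightarrow> p (x + y) = p x \<otimes>\<^bsub>V\<^esub> p y" for x y
    using hom_mult[OF p] by simp
  have p_diff: "x \<in> carrier ?F \<Longrightarrow> y \<in> carrier ?F \<Longrightarrow> p (x - y) = p x \<otimes>\<^bsub>V\<^esub> p y" for x y
    using p_add[of x "- y"] hom_inv_group[OF p group_free_Abelian_group V.is_group, of y]
      V.inv_equality[OF V_square] hom_in_carrier[OF p] by simp
  define s where "s v = frag_of v - frag_of \<one>\<^bsub>V\<^esub>" for v
  define d where "d a b = s a + s b - s (a \<otimes>\<^bsub>V\<^esub> b)" for a b
  have s: "v \<in> carrier V \<Longrightarrow> s v \<in> carrier ?F \<and> p (s v) = v" for v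
    using F_closed[of "frag_of v" "frag_of \<one>\<^bsub>V\<^esub>"] p_diff[of "frag_of v" "frag_of \<one>\<^bsub>V\<^esub>"]
    by (simp add: s_def p_frag)
  have d: "a \<in> carrier V \<Longrightarrow> b \<in> carrier V \<Longrightarrow> d a b \<in> ?R" for a b
    using s[of a] s[of b] s[of "a \<otimes>\<^bsub>V\<^esub> b"] V_square[of "a \<otimes>\<^bsub>V\<^esub> b"]
      F_closed[of "s a" "s b"] F_closed[of "s a + s b" "s (a \<otimes>\<^bsub>V\<^esub> b)"]
      p_add[of "s a" "s b"] p_diff[of "s a + s b" "s (a \<otimes>\<^bsub>V\<^esub> b)"]
    unfolding d_def kernel_def by simp
  have \<theta>_add: "x \<in> ?R \<Longrightarrow> y \<in> ?R \<Longrightarrow> \<theta> (x + y) = \<theta> x \<otimes>\<^bsub>W\<^esub> \<theta> y" for x y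
    using hom_mult[OF \<theta>] by simp
  have "symmetric_cocycle V W (\<lambda>a b. \<theta> (d a b))"
    unfolding symmetric_cocycle_def
  proof (intro conjI ballI)
    fix a b e assume abe: "a \<in> carrier V" "b \<in> carrier V" "e \<in> carrier V"
    have "d a b + d (a \<otimes>\<^bsub>V\<^esub> b) e = d b e + d a (b \<otimes>\<^bsub>V\<^esub> e)"
      using abe by (simp add: d_def V.m_assoc algebra_simps)
    then show "\<theta> (d a b) \<otimes>\<^bsub>W\<^esub> \<theta> (d (a \<otimes>\<^bsub>V\<^esub> b) e) = \<theta> (d b e) \<otimes>\<^bsub>W\<^esub> \<theta> (d a (b \<otimes>\<^bsub>V\<^esub> e))"
      using abe d by (simp flip: \<theta>_add)
  next
    fix b assume "b \<in> carrier V"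
    then show "\<theta> (d \<one>\<^bsub>V\<^esub> b) = \<one>\<^bsub>W\<^esub>"
      using hom_one_group[OF \<theta> subgroup.subgroup_is_group W.is_group]
        group_hom.subgroup_kernel[of ?F V p] p
      by (simp add: d_def s_def group_hom_def group_hom_axioms_def)
  qed (use hom_in_carrier[OF \<theta>] d in \<open>auto simp: d_def V.m_comm add.commute\<close>)
  moreover have "\<theta> (d v v) = q v" if "v \<in> carrier V" for v
    using that s[OF that] \<theta>_double[of "s v"] by (simp add: d_def V_square s_def)
  ultimately show thesis
    using that by blast
qed

definition twisted_eta_diagram :: "('a, 'c) ed \<Rightarrow> ('a \<Rightarrow> 'a \<Rightarrow> 'c set) \<Rightarrow> ('a, 'a \<times> 'c set, 'c) eeed"
  where "twisted_eta_diagram E c = \<lparr>grpA = edA E,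
    grpB = twisted_product (tors2 (edA E)) (mod2 (edC E)) c,
    grpC = edC E, eta = edEta E, chi = (\<lambda>z. (\<one>\<^bsub>edA E\<^esub>, twice (edC E) #>\<^bsub>edC E\<^esub> z)), psi = fst\<rparr>"

lemma is_eeed_twisted_eta_diagram:
  assumes E: "is_ed E" and c: "symmetric_cocycle (tors2 (edA E)) (mod2 (edC E)) c"
    and c_diag: "\<And>v. v \<in> two_torsion (edA E) \<Longrightarrow> c v v = twice (edC E) #>\<^bsub>edC E\<^esub> edEta E v"
  shows "is_eeed (twisted_eta_diagram E c)"
proof -
  let ?A = "edA E" and ?C = "edC E" and ?\<eta> = "edEta E"
  let ?B = "twisted_product (tors2 ?A) (mod2 ?C) c"
  interpret A: comm_group_rec ?A
    using E by (simp add: is_ed_def comm_group_rec_def)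
  interpret C: comm_group_rec ?C
    using E by (simp add: is_ed_def comm_group_rec_def)
  have c_closed: "\<And>a b. a \<in> two_torsion ?A \<Longrightarrow> b \<in> two_torsion ?A \<Longrightarrow> c a b \<in> carrier (mod2 ?C)"
    and c_one: "\<And>b. b \<in> two_torsion ?A \<Longrightarrow> c \<one>\<^bsub>?A\<^esub> b = twice ?C"
    using c by (auto simp: symmetric_cocycle_def one_mod2)
  have one_two_torsion: "\<one>\<^bsub>?A\<^esub> \<in> two_torsion ?A"
    by (simp add: two_torsion_def)
  have "is_eed (twisted_eta_diagram E c)"
    unfolding is_eed_def twisted_eta_diagram_def
  proof (simp only: eeed.simps, intro conjI ballI)
    show "(\<lambda>z. (\<one>\<^bsub>?A\<^esub>, twice ?C #>\<^bsub>?C\<^esub> z)) \<in> hom ?C ?B"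
      using one_two_torsion c_one
      by (intro homI) (simp_all add: C.mod2_class_closed C.mod2_class_mult C.mod2_mult_one)
    show "fst \<in> hom ?B ?A"
      by (rule homI) (auto simp: two_torsion_def)
    show "(\<one>\<^bsub>?A\<^esub>, twice ?C #>\<^bsub>?C\<^esub> ?\<eta> (fst b)) = b \<otimes>\<^bsub>?B\<^esub> b" if b_in: "b \<in> carrier ?B" for b
    proof -
      obtain v X where b: "b = (v, X)" "v \<in> two_torsion ?A" "X \<in> carrier (mod2 ?C)"
        using b_in by auto
      then show ?thesis
        using C.mod2_square[OF b(3)] c_diag[OF b(2)] c_closed[OF b(2,2)]
        by (simp add: two_torsion_def one_mod2 C.mod2_one_mult)
    qed
  qed (use E comm_group_twisted_product[OF A.comm_group_tors2 C.comm_group_mod2 c] in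
      \<open>auto simp: is_ed_def\<close>)
  moreover have "eed_exact (twisted_eta_diagram E c)"
    unfolding eed_exact_def twisted_eta_diagram_def
  proof (simp only: eeed.simps, intro conjI ballI impI)
    show "\<exists>b\<in>carrier ?B. fst b = a" if "a \<in> two_torsion ?A" for a
      using that C.twice_in_mod2 by (intro bexI[of _ "(a, twice ?C)"]) auto
    show "\<exists>z\<in>carrier ?C. (\<one>\<^bsub>?A\<^esub>, twice ?C #>\<^bsub>?C\<^esub> z) = b"
      if "b \<in> carrier ?B" "fst b = \<one>\<^bsub>?A\<^esub>" for b
      using that C.mod2_class_rep C.mod2_rep_closed by (intro bexI[of _ "mod2_rep (snd b)"]) auto
    show "z \<in> twice ?C" if "z \<in> carrier ?C" "(\<one>\<^bsub>?A\<^esub>, twice ?C #>\<^bsub>?C\<^esub> z) = \<one>\<^bsub>?B\<^esub>" for z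
      using that C.mod2_class_eq_one_iff by (simp add: one_mod2)
  qed
  ultimately show ?thesis
    by (simp add: is_eeed_def)
qed

text \<open>The extension B = A[2] \<times> C/2 lives on a set of pairs of cosets; it is moved to
  A \<times> C by choosing coset representatives.\<close>
lemma pi_essentially_surjective:
  fixes E :: "('a, 'c) ed"
  assumes E: "is_ed E"
  shows "\<exists>N :: ('a, 'a \<times> 'c, 'c) eeed. is_eeed N \<and> ed_isomorphic (pi_obj N) E"
proof -
  interpret A: comm_group_rec "edA E"
    using E by (simp add: is_ed_def comm_group_rec_def)
  interpret C: comm_group_rec "edC E"
    using E by (simp add: is_ed_def comm_group_rec_def)
  have \<eta>: "edEta E \<in> hom (edA E) (edC E)"
    using E by (simp add: is_ed_def)
  let ?q = "\<lambda>v. twice (edC E) #>\<^bsub>edC E\<^esub> edEta E v"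
  have "?q \<in> hom (tors2 (edA E)) (mod2 (edC E))"
    by (rule homI) (auto simp: two_torsion_def C.mod2_class_closed hom_in_carrier[OF \<eta>]
        hom_mult[OF \<eta>] C.mod2_class_mult)
  then obtain c where "symmetric_cocycle (tors2 (edA E)) (mod2 (edC E)) c"
    and "\<And>v. v \<in> two_torsion (edA E) \<Longrightarrow> c v v = ?q v"
    using symmetric_cocycle_with_diagonal[OF A.comm_group_tors2 C.comm_group_mod2]
    by (auto simp: two_torsion_def)
  then have N0: "is_eeed (twisted_eta_diagram E c)"
    by (rule is_eeed_twisted_eta_diagram[OF E])
  define j where "j p = (fst p, mod2_rep (snd p))" for p :: "'a \<times> 'c set"
  have "inj_on j (carrier (grpB (twisted_eta_diagram E c)))"
    using C.inj_on_mod2_rep by (auto simp: twisted_eta_diagram_def j_def inj_on_def)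
  then have "is_eeed (transport_B (twisted_eta_diagram E c) j)"
    by (rule is_eeed_transport_B[OF N0])
  moreover have "pi_obj (transport_B (twisted_eta_diagram E c) j) = E"
    unfolding pi_obj_transport_B by (simp add: pi_obj_def twisted_eta_diagram_def)
  ultimately show ?thesis
    using ed_iso_ed_id[OF E] unfolding ed_isomorphic_def
    by (intro exI[of _ "transport_B (twisted_eta_diagram E c) j"] conjI exI[of _ "ed_id E"])
      simp_all
qed

theorem proposition3p7:
  shows
  \<comment> \<open>pi is essentially surjective\<close>
  "(\<forall>E :: ('a, 'c) ed. is_ed E \<longrightarrow>
      (\<exists>N :: ('a, 'a \<times> 'c, 'c) eeed. is_eeed N \<and> ed_isomorphic (pi_obj N) E))
   \<and>
  \<comment> \<open>pi reflects isomorphisms\<close>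
   (\<forall>(N :: ('a, 'b, 'c) eeed) (N' :: ('a2, 'b2, 'c2) eeed) m.
      is_eeed N \<and> is_eeed N' \<and> m \<in> eeed_hom N N' \<and>
      ed_iso (pi_obj N) (pi_obj N') (pi_mor m) \<longrightarrow> eeed_iso N N' m)
   \<and>
  \<comment> \<open>the short exact sequence 0 \<rightarrow> Hom(A[2], C'/2) \<rightarrow> EEED(N,N') \<rightarrow> ED(pi N, pi N') \<rightarrow> 0\<close>
   (\<forall>(N :: ('a, 'b, 'c) eeed) (N' :: ('a2, 'b2, 'c2) eeed).
      is_eeed N \<and> is_eeed N' \<longrightarrow>
      (let H = ghom (tors2 (grpA N)) (mod2 (grpC N')) in
        (\<forall>u\<in>H. xi N N' u \<in> eeed_hom N N') \<and>
        (\<forall>u\<in>H. \<forall>v\<in>H. xi N N' (hom_add (tors2 (grpA N)) (mod2 (grpC N')) u v)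
                         = eeed_add N N' (xi N N' u) (xi N N' v)) \<and>
        (\<forall>m\<in>eeed_hom N N'. \<forall>m'\<in>eeed_hom N N'.
            pi_mor (eeed_add N N' m m') = ed_add (pi_obj N) (pi_obj N') (pi_mor m) (pi_mor m')) \<and>
        inj_on (xi N N') H \<and>
        xi N N' ` H = {m \<in> eeed_hom N N'. pi_mor m = ed_zero (pi_obj N) (pi_obj N')} \<and>
        pi_mor ` eeed_hom N N' = ed_hom (pi_obj N) (pi_obj N')))
   \<and>
  \<comment> \<open>naturality in N and N'\<close>
   (\<forall>(M :: ('a0, 'b0, 'c0) eeed) (N :: ('a, 'b, 'c) eeed) (N' :: ('a2, 'b2, 'c2) eeed)
       (N'' :: ('a3, 'b3, 'c3) eeed) f1 g1 h1 f2 g2 h2.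
      is_eeed M \<and> is_eeed N \<and> is_eeed N' \<and> is_eeed N'' \<and>
      (f1, g1, h1) \<in> eeed_hom M N \<and> (f2, g2, h2) \<in> eeed_hom N' N'' \<longrightarrow>
      (\<forall>u\<in>ghom (tors2 (grpA N)) (mod2 (grpC N')).
         xi M N'' (\<lambda>a\<in>two_torsion (grpA M). mod2_map (grpC N') (grpC N'') h2 (u (f1 a)))
         = eeed_comp M (f2, g2, h2) (eeed_comp M (xi N N' u) (f1, g1, h1))) \<and>
      (\<forall>m\<in>eeed_hom N N'.
         pi_mor (eeed_comp M (f2, g2, h2) (eeed_comp M m (f1, g1, h1)))
         = ed_comp (pi_obj M) (pi_mor (f2, g2, h2)) (ed_comp (pi_obj M) (pi_mor m) (pi_mor (f1, g1, h1)))))"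
proof -
  have pair: "is_eeed N \<Longrightarrow> is_eeed N' \<Longrightarrow> exact_eta_diagram_pair N N'"
    for N :: "('x, 'y, 'z) eeed" and N' :: "('x2, 'y2, 'z2) eeed"
    by (simp add: exact_eta_diagram_pair_def exact_eta_diagram_def)
  show ?thesis
    apply (intro conjI allI impI ballI)
    subgoal by (rule pi_essentially_surjective)
    subgoal by (auto intro: exact_eta_diagram_pair.pi_reflects_iso[OF pair])
    subgoal
      unfolding Let_def
      by (elim conjE) (simp add: exact_eta_diagram_pair.xi_in_eeed_hom[OF pair]
          exact_eta_diagram_pair.xi_hom_add[OF pair] pi_mor_eeed_add
          exact_eta_diagram_pair.inj_on_xi[OF pair] exact_eta_diagram_pair.image_xi[OF pair]
          exact_eta_diagram_pair.image_pi_mor[OF pair])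
    subgoal by (simp add: xi_natural exact_eta_diagram_def)
    subgoal by (simp add: pi_mor_eeed_comp)
    done
qed

end
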